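(* There is an algorithm which, given a first-order sentence $\Phi$ over $\mathcal{B}=\langle \mathbb{T},\sqcup,\sqcap,\bar{\cdot}\rangle$ with arbitrary tree-share constants, of size $n$, computes in time $O(n^2)$ a sentence $\Phi'$ such that: (1) the only constants occurring in $\Phi'$ are $\bullet$ and $\circ$; (2) $\Phi$ and $\Phi'$ have the same number of quantifier alternations; (3) $\Phi$ and $\Phi'$ are equivalent in $\mathcal{B}$ (i.e. $\mathcal{B}\models\Phi$ iff $\mathcal{B}\models\Phi'$); (4) $\Phi'$ has size $O(n^2)$.
   Context: A tree share is a finite binary tree whose leaves are labelled $\bullet$ (black) or $\circ$ (white), in canonical form: no subtree has the form $\mathrm{Node}(\bullet,\bullet)$ or $\mathrm{Node}(\circ,\circ)$ (such subtrees are identified with the leaf $\bullet$, resp. $\circ$). $\mathbb{T}$ denotes the set of tree shares. To compute $\tau_1\sqcup\tau_2$ or $\tau_1\sqcap\tau_2$, unfold both trees (replacing a leaf $\ell$ by $\mathrm{Node}(\ell,\ell)$ as needed) to a common shape, apply Boolean join, resp. meet, leafwise (with $\bullet$ as true and $\circ$ as false), and refold to canonical form; $\bar\tau$ swaps the colours of all leaves. The number of quantifier alternations of a prenex sentence is the number of switches between $\forall$ and $\exists$ blocks. *)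

theory Defs
  imports Main
begin

datatype tree = Leaf bool | Node tree tree
  \<comment> \<open>Leaf True = black (bullet), Leaf False = white (circ)\<close>

fun canonical :: "tree \<Rightarrow> bool" where
  "canonical (Leaf b) = True"
| "canonical (Node l r) = (canonical l \<and> canonical r \<and> \<not> (\<exists>b. l = Leaf b \<and> r = Leaf b))"

definition mk :: "tree \<Rightarrow> tree \<Rightarrow> tree" where
  "mk l r = (case (l, r) of (Leaf a, Leaf b) \<Rightarrow> (if a = b then Leaf a else Node l r) | _ \<Rightarrow> Node l r)"

fun lift2 :: "(bool \<Rightarrow> bool \<Rightarrow> bool) \<Rightarrow> tree \<Rightarrow> tree \<Rightarrow> tree" where
  "lift2 f (Leaf a) (Leaf b) = Leaf (f a b)"
| "lift2 f (Leaf a) (Node l r) = mk (lift2 f (Leaf a) l) (lift2 f (Leaf a) r)"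
| "lift2 f (Node l r) (Leaf b) = mk (lift2 f l (Leaf b)) (lift2 f r (Leaf b))"
| "lift2 f (Node l1 r1) (Node l2 r2) = mk (lift2 f l1 l2) (lift2 f r1 r2)"

definition tjoin :: "tree \<Rightarrow> tree \<Rightarrow> tree" where "tjoin = lift2 (\<or>)"
definition tmeet :: "tree \<Rightarrow> tree \<Rightarrow> tree" where "tmeet = lift2 (\<and>)"

fun tcompl :: "tree \<Rightarrow> tree" where
  "tcompl (Leaf b) = Leaf (\<not> b)"
| "tcompl (Node l r) = Node (tcompl l) (tcompl r)"

datatype trm = TVar nat | TConst tree | TJoin trm trm | TMeet trm trm | TCompl trm

datatype fm = FEq trm trm | FNot fm | FAnd fm fm | FOr fm fm | FAll nat fm | FEx nat fm

fun tval :: "(nat \<Rightarrow> tree) \<Rightarrow> trm \<Rightarrow> tree" where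
  "tval e (TVar x) = e x"
| "tval e (TConst c) = c"
| "tval e (TJoin a b) = tjoin (tval e a) (tval e b)"
| "tval e (TMeet a b) = tmeet (tval e a) (tval e b)"
| "tval e (TCompl a) = tcompl (tval e a)"

fun holds :: "(nat \<Rightarrow> tree) \<Rightarrow> fm \<Rightarrow> bool" where
  "holds e (FEq a b) = (tval e a = tval e b)"
| "holds e (FNot p) = (\<not> holds e p)"
| "holds e (FAnd p q) = (holds e p \<and> holds e q)"
| "holds e (FOr p q) = (holds e p \<or> holds e q)"
| "holds e (FAll x p) = (\<forall>t. canonical t \<longrightarrow> holds (e(x := t)) p)"
| "holds e (FEx x p) = (\<exists>t. canonical t \<and> holds (e(x := t)) p)"

text \<open>Truth of a sentence in the structure B (environment irrelevant for sentences).\<close>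
definition models_B :: "fm \<Rightarrow> bool" where
  "models_B p = holds (\<lambda>_. Leaf False) p"

fun tfv :: "trm \<Rightarrow> nat set" where
  "tfv (TVar x) = {x}"
| "tfv (TConst c) = {}"
| "tfv (TJoin a b) = tfv a \<union> tfv b"
| "tfv (TMeet a b) = tfv a \<union> tfv b"
| "tfv (TCompl a) = tfv a"

fun ffv :: "fm \<Rightarrow> nat set" where
  "ffv (FEq a b) = tfv a \<union> tfv b"
| "ffv (FNot p) = ffv p"
| "ffv (FAnd p q) = ffv p \<union> ffv q"
| "ffv (FOr p q) = ffv p \<union> ffv q"
| "ffv (FAll x p) = ffv p - {x}"
| "ffv (FEx x p) = ffv p - {x}"

definition sentence :: "fm \<Rightarrow> bool" where "sentence p = (ffv p = {})"

fun tconsts :: "trm \<Rightarrow> tree set" where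
  "tconsts (TVar x) = {}"
| "tconsts (TConst c) = {c}"
| "tconsts (TJoin a b) = tconsts a \<union> tconsts b"
| "tconsts (TMeet a b) = tconsts a \<union> tconsts b"
| "tconsts (TCompl a) = tconsts a"

fun fconsts :: "fm \<Rightarrow> tree set" where
  "fconsts (FEq a b) = tconsts a \<union> tconsts b"
| "fconsts (FNot p) = fconsts p"
| "fconsts (FAnd p q) = fconsts p \<union> fconsts q"
| "fconsts (FOr p q) = fconsts p \<union> fconsts q"
| "fconsts (FAll x p) = fconsts p"
| "fconsts (FEx x p) = fconsts p"

fun qfree :: "fm \<Rightarrow> bool" where
  "qfree (FEq a b) = True"
| "qfree (FNot p) = qfree p"
| "qfree (FAnd p q) = (qfree p \<and> qfree q)"
| "qfree (FOr p q) = (qfree p \<and> qfree q)"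
| "qfree (FAll x p) = False"
| "qfree (FEx x p) = False"

inductive prenex :: "fm \<Rightarrow> bool" where
  "qfree p \<Longrightarrow> prenex p"
| "prenex p \<Longrightarrow> prenex (FAll x p)"
| "prenex p \<Longrightarrow> prenex (FEx x p)"

fun qprefix :: "fm \<Rightarrow> bool list" where
  "qprefix (FAll x p) = True # qprefix p"
| "qprefix (FEx x p) = False # qprefix p"
| "qprefix _ = []"

fun switches :: "bool list \<Rightarrow> nat" where
  "switches (a # b # r) = (if a = b then 0 else 1) + switches (b # r)"
| "switches _ = 0"

definition alternations :: "fm \<Rightarrow> nat" where
  "alternations p = switches (qprefix p)"

section \<open>Machine model: Jones' WHILE language over binary trees, with unit-cost time\<close>

datatype dat = DNil | DCons dat dat

fun dsize :: "dat \<Rightarrow> nat" where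
  "dsize DNil = 1"
| "dsize (DCons a b) = 1 + dsize a + dsize b"

datatype exp = EVar nat | ENil | ECons exp exp | EHd exp | ETl exp | EIsNil exp

fun hd_d :: "dat \<Rightarrow> dat" where "hd_d (DCons a b) = a" | "hd_d DNil = DNil"
fun tl_d :: "dat \<Rightarrow> dat" where "tl_d (DCons a b) = b" | "tl_d DNil = DNil"

fun eval :: "(nat \<Rightarrow> dat) \<Rightarrow> exp \<Rightarrow> dat" where
  "eval s (EVar x) = s x"
| "eval s ENil = DNil"
| "eval s (ECons a b) = DCons (eval s a) (eval s b)"
| "eval s (EHd a) = hd_d (eval s a)"
| "eval s (ETl a) = tl_d (eval s a)"
| "eval s (EIsNil a) = (if eval s a = DNil then DCons DNil DNil else DNil)"

fun etime :: "exp \<Rightarrow> nat" where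
  "etime (EVar x) = 1"
| "etime ENil = 1"
| "etime (ECons a b) = 1 + etime a + etime b"
| "etime (EHd a) = 1 + etime a"
| "etime (ETl a) = 1 + etime a"
| "etime (EIsNil a) = 1 + etime a"

datatype com = Assign nat exp | Seq com com | While exp com

inductive exec :: "com \<Rightarrow> (nat \<Rightarrow> dat) \<Rightarrow> nat \<Rightarrow> (nat \<Rightarrow> dat) \<Rightarrow> bool" where
  "exec (Assign x e) s (1 + etime e) (s(x := eval s e))"
| "exec c1 s t1 s1 \<Longrightarrow> exec c2 s1 t2 s2 \<Longrightarrow> exec (Seq c1 c2) s (t1 + t2) s2"
| "eval s b = DNil \<Longrightarrow> exec (While b c) s (1 + etime b) s"
| "eval s b \<noteq> DNil \<Longrightarrow> exec c s t1 s1 \<Longrightarrow> exec (While b c) s1 t2 s2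
     \<Longrightarrow> exec (While b c) s (1 + etime b + t1 + t2) s2"

definition run :: "com \<Rightarrow> dat \<Rightarrow> nat \<Rightarrow> dat \<Rightarrow> bool" where
  "run p x t y = (\<exists>s'. exec p (\<lambda>v. if v = 0 then x else DNil) t s' \<and> s' 1 = y)"

fun tg :: "nat \<Rightarrow> dat" where
  "tg 0 = DNil"
| "tg (Suc k) = DCons DNil (tg k)"

fun enc_nat :: "nat \<Rightarrow> dat" where
  "enc_nat n = (if n = 0 then DNil
     else DCons (if odd n then DCons DNil DNil else DNil) (enc_nat (n div 2)))"

fun enc_tree :: "tree \<Rightarrow> dat" where
  "enc_tree (Leaf b) = DCons (tg 0) (if b then DCons DNil DNil else DNil)"
| "enc_tree (Node l r) = DCons (tg 1) (DCons (enc_tree l) (enc_tree r))"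

fun enc_trm :: "trm \<Rightarrow> dat" where
  "enc_trm (TVar x) = DCons (tg 0) (enc_nat x)"
| "enc_trm (TConst c) = DCons (tg 1) (enc_tree c)"
| "enc_trm (TJoin a b) = DCons (tg 2) (DCons (enc_trm a) (enc_trm b))"
| "enc_trm (TMeet a b) = DCons (tg 3) (DCons (enc_trm a) (enc_trm b))"
| "enc_trm (TCompl a) = DCons (tg 4) (enc_trm a)"

fun enc_fm :: "fm \<Rightarrow> dat" where
  "enc_fm (FEq a b) = DCons (tg 0) (DCons (enc_trm a) (enc_trm b))"
| "enc_fm (FNot p) = DCons (tg 1) (enc_fm p)"
| "enc_fm (FAnd p q) = DCons (tg 2) (DCons (enc_fm p) (enc_fm q))"
| "enc_fm (FOr p q) = DCons (tg 3) (DCons (enc_fm p) (enc_fm q))"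
| "enc_fm (FAll x p) = DCons (tg 4) (DCons (enc_nat x) (enc_fm p))"
| "enc_fm (FEx x p) = DCons (tg 5) (DCons (enc_nat x) (enc_fm p))"

text \<open>Size of a sentence = size of its encoding (constants contribute their node count).\<close>
definition fsize :: "fm \<Rightarrow> nat" where "fsize p = dsize (enc_fm p)"

end

theory Submission
  imports Defs
begin

(* Read a tree share as a clopen subset of Cantor space: an infinite path w \<in> {0,1}^\<nat> lies in
   the share iff walking down the tree along w ends in a black leaf; join, meet and complement
   become union, intersection and complement, and canonical trees represent clopen sets uniquely.

   A constant c is the join of the cylinders of its black leaves. For every position p of the
   union of the shapes of the constants we introduce a fresh variable x_p, constrained by
   x_[] = \<bullet> and, for inner positions p, x_p = x_p0 \<squnion> x_p1, x_p0 \<sqinter> x_p1 = \<circ>, x_p0 \<noteq> \<circ>, x_p1 \<noteq> \<circ>,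
   and replace c by the join of the x_p over the black leaves of c. The constraints are solved by
   the cylinders x_p = [p], which turns the translated matrix back into the original one. Any
   other solution is a tree of nested partitions of Cantor space into nonempty clopen pieces;
   mapping each piece homeomorphically onto the corresponding cylinder yields a homeomorphism of
   Cantor space, hence an automorphism of B that fixes \<bullet> and \<circ> and maps the standard solution to
   the given one. Formulas whose only constants are \<bullet> and \<circ> are invariant under such
   automorphisms, so every solution is as good as the standard one. The new variables are
   quantified in front, with the leading quantifier of the sentence (\<exists> with a conjunction,
   \<forall> with an implication), so the number of alternations does not change.

   The translation is computed by a WHILE program driven by a stack of tasks; it spends a
   constant number of loop iterations per symbol of the input. Since the names of the new
   variables have length O(n) and there are O(n) of them, the output has size O(n^2). *)

section \<open>Tree shares as clopen subsets of Cantor space\<close>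

type_synonym seq = "nat \<Rightarrow> bool"

definition stl :: "seq \<Rightarrow> seq" where
  "stl w = (\<lambda>n. w (Suc n))"

definition scons :: "bool \<Rightarrow> seq \<Rightarrow> seq" where
  "scons b w = (\<lambda>n. case n of 0 \<Rightarrow> b | Suc m \<Rightarrow> w m)"

lemma scons_0 [simp]: "scons b w 0 = b"
  and scons_Suc [simp]: "scons b w (Suc n) = w n"
  and stl_scons [simp]: "stl (scons b w) = w"
  by (auto simp: scons_def stl_def)

lemma scons_stl [simp]: "w 0 = b \<Longrightarrow> scons b (stl w) = w"
  unfolding scons_def stl_def by (rule ext) (simp split: nat.splits)

fun den :: "tree \<Rightarrow> seq \<Rightarrow> bool" where
  "den (Leaf b) w = b"
| "den (Node l r) w = den (if w 0 then r else l) (stl w)"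

lemma den_mk [simp]: "den (mk l r) = den (Node l r)"
  by (auto simp: mk_def split: tree.splits intro!: ext)

lemma den_lift2 [simp]: "den (lift2 f a b) w = f (den a w) (den b w)"
  by (induction f a b arbitrary: w rule: lift2.induct) auto

lemma den_tjoin [simp]: "den (tjoin a b) w = (den a w \<or> den b w)"
  and den_tmeet [simp]: "den (tmeet a b) w = (den a w \<and> den b w)"
  by (simp_all add: tjoin_def tmeet_def)

lemma den_tcompl [simp]: "den (tcompl a) w = (\<not> den a w)"
  by (induction a arbitrary: w) auto

lemma canonical_mk [simp]: "canonical l \<Longrightarrow> canonical r \<Longrightarrow> canonical (mk l r)"
  by (auto simp: mk_def split: tree.splits)

lemma canonical_lift2 [simp]: "canonical (lift2 f a b)"
  by (induction f a b rule: lift2.induct) auto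

lemma canonical_tjoin [simp]: "canonical (tjoin a b)"
  and canonical_tmeet [simp]: "canonical (tmeet a b)"
  by (simp_all add: tjoin_def tmeet_def)

lemma canonical_tcompl [simp]: "canonical a \<Longrightarrow> canonical (tcompl a)"
proof (induction a)
  case (Node l r)
  then show ?case by (cases l; cases r) auto
qed simp

lemma canonical_const_den: "canonical a \<Longrightarrow> \<forall>w. den a w = c \<Longrightarrow> a = Leaf c"
proof (induction a)
  case (Node l r)
  have "\<forall>w. den l w = c" "\<forall>w. den r w = c"
    using Node.prems(2)[rule_format, of "scons False _"] Node.prems(2)[rule_format, of "scons True _"]
    by simp_all
  then show ?case using Node by auto
qed simp

lemma den_inject: "canonical a \<Longrightarrow> canonical b \<Longrightarrow> den a = den b \<Longrightarrow> a = b"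
proof (induction a arbitrary: b)
  case (Leaf x)
  have "\<forall>w. den b w = x" using Leaf.prems(3) by (metis den.simps(1))
  then show ?case using canonical_const_den[of b x] Leaf.prems(2) by simp
next
  case (Node l r)
  show ?case
  proof (cases b)
    case (Leaf y)
    have "\<forall>w. den (Node l r) w = y" using Node.prems(3) Leaf by (metis den.simps(1))
    then show ?thesis using canonical_const_den[of "Node l r" y] Node.prems(1) by blast
  next
    case (Node l' r')
    have "den l w = den l' w" "den r w = den r' w" for w
      using fun_cong[OF Node.prems(3), of "scons False w"] fun_cong[OF Node.prems(3), of "scons True w"]
      unfolding Node by simp_all
    then have "den l = den l'" "den r = den r'" by blast+
    moreover have "canonical l" "canonical r" "canonical l'" "canonical r'"
      using Node.prems(1,2) unfolding Node by simp_all
    ultimately show ?thesis using Node.IH unfolding Node by blast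
  qed
qed

definition agree :: "nat \<Rightarrow> seq \<Rightarrow> seq \<Rightarrow> bool" where
  "agree N w w' = (\<forall>i<N. w i = w' i)"

definition finitary :: "(seq \<Rightarrow> bool) \<Rightarrow> bool" where
  "finitary f = (\<exists>N. \<forall>w w'. agree N w w' \<longrightarrow> f w = f w')"

definition cantor_cont :: "(seq \<Rightarrow> seq) \<Rightarrow> bool" where
  "cantor_cont G = (\<forall>N. \<exists>M. \<forall>w w'. agree M w w' \<longrightarrow> agree N (G w) (G w'))"

lemma agree_Suc: "agree (Suc N) w w' = (w 0 = w' 0 \<and> agree N (stl w) (stl w'))"
  unfolding agree_def stl_def by (auto simp: less_Suc_eq_0_disj)

lemma agree_mono: "agree M w w' \<Longrightarrow> N \<le> M \<Longrightarrow> agree N w w'"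
  unfolding agree_def by auto

lemma finitary_den: "finitary (den t)"
  unfolding finitary_def
proof (induction t)
  case (Node l r)
  then obtain N1 N2 where N: "\<forall>w w'. agree N1 w w' \<longrightarrow> den l w = den l w'"
    "\<forall>w w'. agree N2 w w' \<longrightarrow> den r w = den r w'" by blast
  have "den (Node l r) w = den (Node l r) w'" if "agree (Suc (max N1 N2)) w w'" for w w'
  proof -
    have "w 0 = w' 0" "agree N1 (stl w) (stl w')" "agree N2 (stl w) (stl w')"
      using that by (auto simp: agree_Suc intro: agree_mono)
    then show ?thesis using N by simp
  qed
  then show ?case by blast
qed auto

lemma finitary_imp_den: "finitary f \<Longrightarrow> \<exists>t. canonical t \<and> den t = f"
proof -
  have "\<forall>w w'. agree N w w' \<longrightarrow> f w = f w' \<Longrightarrow> \<exists>t. canonical t \<and> den t = f" for N f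
  proof (induction N arbitrary: f)
    case 0
    then have "den (Leaf (f (\<lambda>_. False))) w = f w" for w by (simp add: agree_def)
    then show ?case by (intro exI[of _ "Leaf (f (\<lambda>_. False))"]) auto
  next
    case (Suc N)
    have half: "\<forall>w w'. agree N w w' \<longrightarrow> f (scons b w) = f (scons b w')" for b
      using Suc.prems by (auto simp: agree_Suc)
    obtain l where l: "canonical l" "den l = (\<lambda>w. f (scons False w))"
      using Suc.IH[OF half] by blast
    obtain r where r: "canonical r" "den r = (\<lambda>w. f (scons True w))"
      using Suc.IH[OF half] by blast
    have "den (mk l r) w = f w" for w
      using l r scons_stl[of w "w 0"] by (cases "w 0") simp_all
    then show ?case using l r by (intro exI[of _ "mk l r"]) auto
  qed
  then show "finitary f \<Longrightarrow> ?thesis" unfolding finitary_def by blast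
qed

lemma finitary_comp: "finitary f \<Longrightarrow> cantor_cont G \<Longrightarrow> finitary (\<lambda>w. f (G w))"
  unfolding finitary_def cantor_cont_def by metis

lemma finitary_0: "finitary (\<lambda>w. w 0)"
  unfolding finitary_def agree_def by (intro exI[of _ 1]) auto

lemma cantor_cont_id: "cantor_cont (\<lambda>w. w)"
  unfolding cantor_cont_def by blast

lemma cantor_cont_comp: "cantor_cont F \<Longrightarrow> cantor_cont G \<Longrightarrow> cantor_cont (\<lambda>w. F (G w))"
  unfolding cantor_cont_def by metis

lemma cantor_cont_stl: "cantor_cont stl"
  unfolding cantor_cont_def agree_def stl_def by (intro allI exI[of _ "Suc _"]) auto

lemma cantor_cont_scons: "cantor_cont F \<Longrightarrow> cantor_cont (\<lambda>w. scons b (F w))"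
  unfolding cantor_cont_def
proof (intro allI)
  fix N assume "\<forall>N. \<exists>M. \<forall>w w'. agree M w w' \<longrightarrow> agree N (F w) (F w')"
  then obtain M where "\<forall>w w'. agree M w w' \<longrightarrow> agree N (F w) (F w')" by blast
  then show "\<exists>M. \<forall>w w'. agree M w w' \<longrightarrow> agree N (scons b (F w)) (scons b (F w'))"
    by (intro exI[of _ M]) (auto simp: agree_def scons_def split: nat.splits)
qed

lemma cantor_cont_if:
  assumes "finitary P" "cantor_cont F" "cantor_cont G"
  shows "cantor_cont (\<lambda>w. if P w then F w else G w)"
  unfolding cantor_cont_def
proof
  fix N
  obtain M0 where M0: "\<forall>w w'. agree M0 w w' \<longrightarrow> P w = P w'"
    using assms(1) unfolding finitary_def by blast
  obtain M1 where M1: "\<forall>w w'. agree M1 w w' \<longrightarrow> agree N (F w) (F w')"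
    using assms(2) unfolding cantor_cont_def by blast
  obtain M2 where M2: "\<forall>w w'. agree M2 w w' \<longrightarrow> agree N (G w) (G w')"
    using assms(3) unfolding cantor_cont_def by blast
  show "\<exists>M. \<forall>w w'. agree M w w' \<longrightarrow>
      agree N (if P w then F w else G w) (if P w' then F w' else G w')"
    using M0 M1 M2 agree_mono
    by (intro exI[of _ "max M0 (max M1 M2)"]) (smt (verit) max.cobounded1 max.cobounded2 max.coboundedI2)
qed

section \<open>Homeomorphisms of Cantor space induce automorphisms\<close>

locale cantor_homeo =
  fixes G H :: "seq \<Rightarrow> seq"
  assumes cont_G: "cantor_cont G" and cont_H: "cantor_cont H"
    and G_H: "\<And>v. G (H v) = v" and H_G: "\<And>w. H (G w) = w"
begin

definition transport :: "tree \<Rightarrow> tree" where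
  "transport t = (SOME t'. canonical t' \<and> den t' = (\<lambda>w. den t (G w)))"

lemma transport_spec: "canonical (transport t) \<and> den (transport t) = (\<lambda>w. den t (G w))"
proof -
  have "\<exists>t'. canonical t' \<and> den t' = (\<lambda>w. den t (G w))"
    by (rule finitary_imp_den[OF finitary_comp[OF finitary_den cont_G]])
  then show ?thesis unfolding transport_def by (rule someI_ex)
qed

lemma canonical_transport [simp]: "canonical (transport t)"
  using transport_spec by blast

lemma den_transport [simp]: "den (transport t) w = den t (G w)"
  using transport_spec by simp

lemma transport_eqI: "canonical t' \<Longrightarrow> (\<And>w. den t' w = den t (G w)) \<Longrightarrow> transport t = t'"
  by (rule den_inject) (auto intro!: ext)

lemma transport_inject: "canonical a \<Longrightarrow> canonical b \<Longrightarrow> transport a = transport b \<Longrightarrow> a = b"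
proof -
  assume ab: "canonical a" "canonical b" "transport a = transport b"
  then have "den a (G w) = den b (G w)" for w by (metis den_transport)
  then have "den a v = den b v" for v by (metis G_H)
  then show "a = b" using ab by (intro den_inject) (auto intro!: ext)
qed

lemma transport_surj: "canonical y \<Longrightarrow> \<exists>t. canonical t \<and> transport t = y"
proof -
  assume y: "canonical y"
  obtain t where t: "canonical t" "den t = (\<lambda>v. den y (H v))"
    using finitary_imp_den[OF finitary_comp[OF finitary_den cont_H]] by blast
  have "transport t = y" by (rule transport_eqI[OF y]) (simp add: t H_G)
  then show ?thesis using t by blast
qed

lemma transport_Leaf [simp]: "transport (Leaf c) = Leaf c"
  and transport_tjoin [simp]: "transport (tjoin a b) = tjoin (transport a) (transport b)"
  and transport_tmeet [simp]: "transport (tmeet a b) = tmeet (transport a) (transport b)"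
  and transport_tcompl [simp]: "canonical a \<Longrightarrow> transport (tcompl a) = tcompl (transport a)"
  by (rule transport_eqI, simp, simp)+

lemma tval_transport:
  assumes "\<forall>x. canonical (e x)" "tconsts a \<subseteq> {Leaf True, Leaf False}"
  shows "tval (\<lambda>v. transport (e v)) a = transport (tval e a) \<and> canonical (tval e a)"
  using assms(2) by (induction a) (use assms(1) in auto)

lemma all_canonical_transport:
  "(\<forall>t. canonical t \<longrightarrow> P t) \<longleftrightarrow> (\<forall>t. canonical t \<longrightarrow> P (transport t))"
  and ex_canonical_transport:
  "(\<exists>t. canonical t \<and> P t) \<longleftrightarrow> (\<exists>t. canonical t \<and> P (transport t))"
  by (metis canonical_transport transport_surj)+

lemma holds_transport:
  "\<forall>x. canonical (e x) \<Longrightarrow> fconsts p \<subseteq> {Leaf True, Leaf False} \<Longrightarrow>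
   holds (\<lambda>v. transport (e v)) p = holds e p"
proof (induction p arbitrary: e)
  case (FEq a b)
  then have "tval (\<lambda>v. transport (e v)) a = transport (tval e a)" "canonical (tval e a)"
    "tval (\<lambda>v. transport (e v)) b = transport (tval e b)" "canonical (tval e b)"
    using tval_transport[of e a] tval_transport[of e b] by auto
  then show ?case using transport_inject by auto
next
  case (FAll x p)
  have "holds ((\<lambda>v. transport (e v))(x := transport t)) p = holds (e(x := t)) p" if "canonical t" for t
  proof -
    have eq: "(\<lambda>v. transport (e v))(x := transport t) = (\<lambda>v. transport ((e(x := t)) v))" by auto
    have "holds (\<lambda>v. transport ((e(x := t)) v)) p = holds (e(x := t)) p"
      using FAll.prems that by (intro FAll.IH) auto
    then show ?thesis by (simp only: eq)
  qed
  then show ?case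
    using all_canonical_transport[of "\<lambda>t. holds ((\<lambda>v. transport (e v))(x := t)) p"] by simp
next
  case (FEx x p)
  have "holds ((\<lambda>v. transport (e v))(x := transport t)) p = holds (e(x := t)) p" if "canonical t" for t
  proof -
    have eq: "(\<lambda>v. transport (e v))(x := transport t) = (\<lambda>v. transport ((e(x := t)) v))" by auto
    have "holds (\<lambda>v. transport ((e(x := t)) v)) p = holds (e(x := t)) p"
      using FEx.prems that by (intro FEx.IH) auto
    then show ?thesis by (simp only: eq)
  qed
  then show ?case
    using ex_canonical_transport[of "\<lambda>t. holds ((\<lambda>v. transport (e v))(x := t)) p"] by auto
qed auto

end

section \<open>Splittings of Cantor space and the homeomorphisms they induce\<close>

text \<open>For a nonempty clopen set \<open>a\<close>, \<open>zoom a\<close> maps \<open>den a\<close> homeomorphically onto Cantor space by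
  deleting the steps of a path at which \<open>a\<close> has only one nonempty side; \<open>unzoom a\<close> is its inverse.\<close>

fun zoom :: "tree \<Rightarrow> seq \<Rightarrow> seq" where
  "zoom (Leaf b) w = w"
| "zoom (Node l r) w = (if l = Leaf False then zoom r (stl w) else if r = Leaf False then zoom l (stl w)
     else if w 0 then scons True (zoom r (stl w)) else scons False (zoom l (stl w)))"

fun unzoom :: "tree \<Rightarrow> seq \<Rightarrow> seq" where
  "unzoom (Leaf b) v = v"
| "unzoom (Node l r) v = (if l = Leaf False then scons True (unzoom r v) else if r = Leaf False
  then scons False (unzoom l v)
     else if v 0 then scons True (unzoom r (stl v)) else scons False (unzoom l (stl v)))"

definition nonzero :: "tree \<Rightarrow> bool" where "nonzero a = (canonical a \<and> a \<noteq> Leaf False)"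

lemma nonzero_Node: "nonzero (Node l r) \<Longrightarrow> canonical l \<and> canonical r \<and> (l \<noteq> Leaf False \<or> r \<noteq> Leaf False)"
  by (auto simp: nonzero_def)

lemma nonzero_leaf: "nonzero (Leaf b) = b" by (auto simp: nonzero_def)

lemma unzoom_in: "nonzero a \<Longrightarrow> den a (unzoom a v)"
proof (induction a arbitrary: v)
  case (Leaf x) then show ?case by (simp add: nonzero_leaf)
next
  case (Node l r)
  then show ?case using nonzero_Node[OF Node.prems] by (auto simp: nonzero_def)
qed

lemma zoom_unzoom: "nonzero a \<Longrightarrow> zoom a (unzoom a v) = v"
proof (induction a arbitrary: v)
  case (Leaf x) then show ?case by simp
next
  case (Node l r)
  then show ?case using nonzero_Node[OF Node.prems] by (auto simp: nonzero_def)
qed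

lemma unzoom_zoom: "nonzero a \<Longrightarrow> den a w \<Longrightarrow> unzoom a (zoom a w) = w"
proof (induction a arbitrary: w)
  case (Leaf x) then show ?case by simp
next
  case (Node l r)
  then show ?case using nonzero_Node[OF Node.prems(1)] by (auto simp: nonzero_def)
qed

lemma cantor_cont_zoom: "cantor_cont (zoom a)"
proof (induction a)
  case (Leaf x)
  then show ?case using cantor_cont_id by simp
next
  case (Node l r)
  have c: "cantor_cont (\<lambda>w. zoom r (stl w))" "cantor_cont (\<lambda>w. zoom l (stl w))"
    using cantor_cont_comp[OF Node.IH(2) cantor_cont_stl] cantor_cont_comp[OF Node.IH(1) cantor_cont_stl] by auto
  have "cantor_cont (\<lambda>w. if w 0 then scons True (zoom r (stl w)) else scons False (zoom l (stl w)))"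
    by (intro cantor_cont_if finitary_0 cantor_cont_scons c)
  then show ?case using c by (cases "l = Leaf False"; cases "r = Leaf False") (simp_all add: zoom.simps unzoom.simps)
qed

lemma cantor_cont_unzoom: "cantor_cont (unzoom a)"
proof (induction a)
  case (Leaf x)
  then show ?case using cantor_cont_id by simp
next
  case (Node l r)
  have c: "cantor_cont (\<lambda>w. unzoom r (stl w))" "cantor_cont (\<lambda>w. unzoom l (stl w))"
    using cantor_cont_comp[OF Node.IH(2) cantor_cont_stl] cantor_cont_comp[OF Node.IH(1) cantor_cont_stl] by auto
  have "cantor_cont (\<lambda>w. if w 0 then scons True (unzoom r (stl w)) else scons False (unzoom l (stl w)))"
    by (intro cantor_cont_if finitary_0 cantor_cont_scons c)
  moreover have "cantor_cont (\<lambda>w. scons True (unzoom r w))" "cantor_cont (\<lambda>w. scons False (unzoom l w))"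
    by (intro cantor_cont_scons Node.IH)+
  ultimately show ?case by (cases "l = Leaf False"; cases "r = Leaf False") (simp_all add: zoom.simps unzoom.simps)
qed

fun zoom_split :: "(bool list \<Rightarrow> tree) \<Rightarrow> tree \<Rightarrow> bool list \<Rightarrow> seq \<Rightarrow> seq" where
  "zoom_split A (Leaf b) p w = zoom (A p) w"
| "zoom_split A (Node K0 K1) p w = (if den (A (p @ [False])) w
  then scons False (zoom_split A K0 (p @ [False]) w)
      else scons True (zoom_split A K1 (p @ [True]) w))"

fun unzoom_split :: "(bool list \<Rightarrow> tree) \<Rightarrow> tree \<Rightarrow> bool list \<Rightarrow> seq \<Rightarrow> seq" where
  "unzoom_split A (Leaf b) p v = unzoom (A p) v"
| "unzoom_split A (Node K0 K1) p v = (if v 0 then unzoom_split A K1 (p @ [True]) (stl v)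
  else unzoom_split A K0 (p @ [False]) (stl v))"

fun splitting :: "(bool list \<Rightarrow> tree) \<Rightarrow> tree \<Rightarrow> bool list \<Rightarrow> bool" where
  "splitting A (Leaf b) p = nonzero (A p)"
| "splitting A (Node K0 K1) p = (nonzero (A p) \<and> (\<forall>w. den (A (p @ [False])) w \<or> den (A (p @ [True])) w \<longleftrightarrow> den (A p) w)
     \<and> (\<forall>w. \<not> (den (A (p @ [False])) w \<and> den (A (p @ [True])) w)) \<and> splitting A K0 (p @ [False]) \<and> splitting A K1 (p @ [True]))"

lemma unzoom_split_in: "splitting A K p \<Longrightarrow> den (A p) (unzoom_split A K p v)"
proof (induction K arbitrary: p v)
  case (Leaf x) then show ?case by (simp add: unzoom_in)
next
  case (Node K0 K1)
  then show ?case by auto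
qed

lemma zoom_split_unzoom_split: "splitting A K p \<Longrightarrow> zoom_split A K p (unzoom_split A K p v) = v"
proof (induction K arbitrary: p v)
  case (Leaf x) then show ?case by (simp add: zoom_unzoom)
next
  case (Node K0 K1)
  show ?case
  proof (cases "v 0")
    case True
    have "den (A (p @ [True])) (unzoom_split A K1 (p @ [True]) (stl v))" using Node by (auto intro: unzoom_split_in)
    then have "\<not> den (A (p @ [False])) (unzoom_split A K1 (p @ [True]) (stl v))" using Node.prems by auto
    then show ?thesis using Node True by auto
  next
    case False
    have "den (A (p @ [False])) (unzoom_split A K0 (p @ [False]) (stl v))" using Node by (auto intro: unzoom_split_in)
    then show ?thesis using Node False by auto
  qed
qed

lemma unzoom_split_zoom_split: "splitting A K p \<Longrightarrow> den (A p) w \<Longrightarrow> unzoom_split A K p (zoom_split A K p w) = w"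
proof (induction K arbitrary: p w)
  case (Leaf x) then show ?case by (simp add: unzoom_zoom)
next
  case (Node K0 K1)
  show ?case
  proof (cases "den (A (p @ [False])) w")
    case True
    then show ?thesis using Node by auto
  next
    case False
    then have "den (A (p @ [True])) w" using Node.prems by auto
    then show ?thesis using Node False by auto
  qed
qed

lemma cantor_cont_zoom_split: "cantor_cont (zoom_split A K p)"
proof (induction K arbitrary: p)
  case (Leaf x) then show ?case using cantor_cont_zoom by simp
next
  case (Node K0 K1)
  have "cantor_cont (\<lambda>w. if den (A (p @ [False])) w then scons False (zoom_split A K0 (p @ [False]) w)
      else scons True (zoom_split A K1 (p @ [True]) w))"
    by (intro cantor_cont_if finitary_den cantor_cont_scons Node.IH)
  then show ?case by simp
qed

lemma cantor_cont_unzoom_split: "cantor_cont (unzoom_split A K p)"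
proof (induction K arbitrary: p)
  case (Leaf x) then show ?case using cantor_cont_unzoom by simp
next
  case (Node K0 K1)
  have "cantor_cont (\<lambda>w. if w 0 then unzoom_split A K1 (p @ [True]) (stl w)
    else unzoom_split A K0 (p @ [False]) (stl w))"
    by (intro cantor_cont_if finitary_0 cantor_cont_comp[OF _ cantor_cont_stl] Node.IH)
  then show ?case by simp
qed

fun positions :: "tree \<Rightarrow> bool list set" where
  "positions (Leaf b) = {[]}"
| "positions (Node K0 K1) = insert [] (Cons False ` positions K0 \<union> Cons True ` positions K1)"

definition starts_with :: "bool list \<Rightarrow> seq \<Rightarrow> bool" where
  "starts_with q v = (\<forall>i<length q. v i = q ! i)"

lemma starts_with_Nil [simp]: "starts_with [] v"
  by (simp add: starts_with_def)

lemma starts_with_Cons [simp]: "starts_with (b # q) v = (v 0 = b \<and> starts_with q (stl v))"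
  unfolding starts_with_def stl_def by (auto simp: less_Suc_eq_0_disj)

lemma starts_with_snoc: "starts_with (p @ [b]) v = (starts_with p v \<and> v (length p) = b)"
  unfolding starts_with_def by (auto simp: nth_append less_Suc_eq)

lemma sub_region: "splitting A K p \<Longrightarrow> q \<in> positions K \<Longrightarrow> den (A (p @ q)) w \<Longrightarrow> den (A p) w"
proof (induction K arbitrary: p q)
  case (Leaf x) then show ?case by simp
next
  case (Node K0 K1)
  from Node.prems(2) consider "q = []" | q' where "q = False # q'" "q' \<in> positions K0"
     | q' where "q = True # q'" "q' \<in> positions K1" by auto
  then show ?case
  proof cases
    case 1 then show ?thesis using Node by simp
  next
    case 2
    then have "den (A (p @ [False])) w" using Node.IH(1)[of "p @ [False]" q'] Node.prems by auto
    then show ?thesis using Node.prems by auto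
  next
    case 3
    then have "den (A (p @ [True])) w" using Node.IH(2)[of "p @ [True]" q'] Node.prems by auto
    then show ?thesis using Node.prems by auto
  qed
qed

lemma zoom_split_prefix: "splitting A K p \<Longrightarrow> q \<in> positions K \<Longrightarrow> den (A p) w \<Longrightarrow>
   starts_with q (zoom_split A K p w) = den (A (p @ q)) w"
proof (induction K arbitrary: p q)
  case (Leaf x) then show ?case by simp
next
  case (Node K0 K1)
  from Node.prems(2) consider "q = []" | q' where "q = False # q'" "q' \<in> positions K0"
     | q' where "q = True # q'" "q' \<in> positions K1" by auto
  then show ?case
  proof cases
    case 1 then show ?thesis using Node by simp
  next
    case 2
    show ?thesis
    proof (cases "den (A (p @ [False])) w")
      case True
      then show ?thesis using 2 Node.IH(1)[of "p @ [False]" q'] Node.prems by auto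
    next
      case False
      have "\<not> den (A ((p @ [False]) @ q')) w"
        using sub_region[of A K0 "p @ [False]" q' w] False Node.prems 2 by auto
      then show ?thesis using 2 False by auto
    qed
  next
    case 3
    show ?thesis
    proof (cases "den (A (p @ [False])) w")
      case True
      have "\<not> den (A (p @ [True])) w" using True Node.prems by auto
      then have "\<not> den (A ((p @ [True]) @ q')) w"
        using sub_region[of A K1 "p @ [True]" q' w] Node.prems 3 by auto
      then show ?thesis using 3 True by auto
    next
      case False
      have "den (A (p @ [True])) w" using False Node.prems by auto
      then show ?thesis using 3 False Node.IH(2)[of "p @ [True]" q'] Node.prems by auto
    qed
  qed
qed

section \<open>Eliminating the constants\<close>

text \<open>The variables of the input sentence are renamed to odd numbers \<open>2 x + 1\<close>; the new variable
  for position \<open>p\<close> is the even number \<open>pvar (rev p)\<close>. Positions are handled reversed because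
  the program extends them by consing.\<close>

fun pos_code :: "bool list \<Rightarrow> nat" where
  "pos_code [] = 1"
| "pos_code (b # rp) = 2 * pos_code rp + (if b then 1 else 0)"

definition pvar :: "bool list \<Rightarrow> nat" where
  "pvar rp = 2 * pos_code rp"

lemma pos_code_pos: "pos_code rp \<ge> 1"
  by (induction rp) auto

lemma pos_code_inj: "pos_code rp = pos_code rp' \<Longrightarrow> rp = rp'"
proof (induction rp arbitrary: rp')
  case Nil
  have "pos_code (b # l) \<ge> 2" for b l using pos_code_pos[of l] by auto
  then show ?case using Nil by (cases rp') (auto, metis One_nat_def Suc_1 Suc_n_not_le_n)
next
  case (Cons b rp)
  show ?case
  proof (cases rp')
    case Nil
    then show ?thesis using Cons.prems pos_code_pos[of rp] by simp
  next
    case (Cons b' l)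
    then have "2 * pos_code rp + (if b then 1 else 0) = 2 * pos_code l + (if b' then 1 else 0)"
      using Cons.prems by simp
    then have "b = b'" "pos_code rp = pos_code l" by (auto split: if_splits) presburger+
    then show ?thesis using Cons Cons.IH by simp
  qed
qed

lemma pvar_eq_iff [simp]: "pvar rp = pvar rp' \<longleftrightarrow> rp = rp'"
  using pos_code_inj by (auto simp: pvar_def)

lemma even_pvar: "even (pvar rp)"
  by (simp add: pvar_def)

lemma odd_neq_pvar [simp]: "Suc (2 * x) \<noteq> pvar rp" "pvar rp \<noteq> Suc (2 * x)"
  unfolding pvar_def by presburger+

fun cylinder :: "bool list \<Rightarrow> tree" where
  "cylinder [] = Leaf True"
| "cylinder (b # p) = (if b then Node (Leaf False) (cylinder p) else Node (cylinder p) (Leaf False))"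

lemma den_cylinder [simp]: "den (cylinder p) v = starts_with p v"
  by (induction p arbitrary: v) auto

lemma cylinder_neq_bot: "cylinder p \<noteq> Leaf False"
proof
  assume "cylinder p = Leaf False"
  then have "den (cylinder p) (\<lambda>i. p ! i) = False" by simp
  then show False by (simp add: starts_with_def)
qed

lemma canonical_cylinder [simp]: "canonical (cylinder p)"
proof (induction p)
  case (Cons b p)
  then show ?case using cylinder_neq_bot[of p] by (cases "cylinder p") auto
qed simp

lemma cylinder_split:
  "tjoin (cylinder (p @ [False])) (cylinder (p @ [True])) = cylinder p"
  "tmeet (cylinder (p @ [False])) (cylinder (p @ [True])) = Leaf False"
  by (rule den_inject; auto simp: starts_with_snoc)+

fun tr_const :: "tree \<Rightarrow> bool list \<Rightarrow> trm" where
  "tr_const (Leaf b) rp = (if b then TVar (pvar rp) else TConst (Leaf False))"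
| "tr_const (Node l r) rp = TJoin (tr_const l (False # rp)) (tr_const r (True # rp))"

definition sdrop :: "nat \<Rightarrow> seq \<Rightarrow> seq" where
  "sdrop n v = (\<lambda>i. v (i + n))"

lemma den_tr_const_cylinders:
  assumes "\<forall>rp. e (pvar rp) = cylinder (rev rp)"
  shows "den (tval e (tr_const c (rev p))) w = (starts_with p w \<and> den c (sdrop (length p) w))"
proof (induction c arbitrary: p)
  case (Node l r)
  have "stl (sdrop n w) = sdrop (Suc n) w" "sdrop n w 0 = w n" for n
    by (simp_all add: stl_def sdrop_def)
  then show ?case
    using Node.IH[of "p @ [False]"] Node.IH[of "p @ [True]"] by (auto simp: starts_with_snoc)
qed (simp add: assms)

lemma canonical_tval:
  "\<forall>x. canonical (e x) \<Longrightarrow> \<forall>k\<in>tconsts a. canonical k \<Longrightarrow> canonical (tval e a)"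
  by (induction a) auto

lemma tval_tr_const_cylinders:
  assumes "\<forall>rp. e (pvar rp) = cylinder (rev rp)" "\<forall>x. canonical (e x)" "canonical c"
  shows "tval e (tr_const c []) = c"
proof (rule den_inject)
  have "tconsts (tr_const c rp) \<subseteq> {Leaf False}" for rp
    by (induction c arbitrary: rp) auto
  then show "canonical (tval e (tr_const c []))"
    using assms(2) canonical_tval by fastforce
  show "den (tval e (tr_const c [])) = den c"
    using den_tr_const_cylinders[of e c "[]"] assms(1) by (auto simp: sdrop_def)
qed fact

fun tr_trm :: "trm \<Rightarrow> trm" where
  "tr_trm (TVar x) = TVar (2 * x + 1)"
| "tr_trm (TConst c) = tr_const c []"
| "tr_trm (TJoin a b) = TJoin (tr_trm a) (tr_trm b)"
| "tr_trm (TMeet a b) = TMeet (tr_trm a) (tr_trm b)"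
| "tr_trm (TCompl a) = TCompl (tr_trm a)"

fun tr_fm :: "fm \<Rightarrow> fm" where
  "tr_fm (FEq a b) = FEq (tr_trm a) (tr_trm b)"
| "tr_fm (FNot p) = FNot (tr_fm p)"
| "tr_fm (FAnd p q) = FAnd (tr_fm p) (tr_fm q)"
| "tr_fm (FOr p q) = FOr (tr_fm p) (tr_fm q)"
| "tr_fm (FAll x p) = FAll (2 * x + 1) (tr_fm p)"
| "tr_fm (FEx x p) = FEx (2 * x + 1) (tr_fm p)"

lemma qfree_tr_fm: "qfree \<phi> \<Longrightarrow> qfree (tr_fm \<phi>)"
  by (induction \<phi>) auto

lemma fconsts_tr_fm: "fconsts (tr_fm \<phi>) \<subseteq> {Leaf True, Leaf False}"
proof -
  have "tconsts (tr_const c rp) \<subseteq> {Leaf False}" for c rp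
    by (induction c arbitrary: rp) auto
  then have "tconsts (tr_trm a) \<subseteq> {Leaf True, Leaf False}" for a
    by (induction a) fastforce+
  then show ?thesis by (induction \<phi>) auto
qed

fun below_vars :: "tree \<Rightarrow> bool list \<Rightarrow> nat set" where
  "below_vars (Leaf b) rp = {}"
| "below_vars (Node l r) rp =
     {pvar (False # rp), pvar (True # rp)} \<union> below_vars l (False # rp) \<union> below_vars r (True # rp)"

definition new_vars :: "fm \<Rightarrow> nat set" where
  "new_vars \<phi> = insert (pvar []) (\<Union>c\<in>fconsts \<phi>. below_vars c [])"

lemma even_new_vars: "v \<in> new_vars \<phi> \<Longrightarrow> even v"
proof -
  have "v \<in> below_vars c rp \<Longrightarrow> even v" for c rp v
    by (induction c arbitrary: rp) (auto simp: even_pvar)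
  then show "v \<in> new_vars \<phi> \<Longrightarrow> even v" by (auto simp: new_vars_def even_pvar)
qed

lemma ffv_tr_fm: "ffv (tr_fm \<phi>) \<subseteq> (\<lambda>x. 2 * x + 1) ` ffv \<phi> \<union> new_vars \<phi>"
proof -
  have "tfv (tr_const c rp) \<subseteq> insert (pvar rp) (below_vars c rp)" for c rp
    by (induction c arbitrary: rp) auto
  then have trm: "tfv (tr_trm a) \<subseteq> (\<lambda>x. 2 * x + 1) ` tfv a \<union> insert (pvar []) (\<Union>c\<in>tconsts a. below_vars c [])"
    for a by (induction a) auto
  show ?thesis
  proof (induction \<phi>)
    case (FEq a b)
    then show ?case using trm[of a] trm[of b] by (auto simp: new_vars_def)
  next
    case (FAll x p)
    have "2 * x + 1 \<notin> new_vars p" using even_new_vars by fastforce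
    with FAll show ?case by (auto simp: new_vars_def)
  next
    case (FEx x p)
    have "2 * x + 1 \<notin> new_vars p" using even_new_vars by fastforce
    with FEx show ?case by (auto simp: new_vars_def)
  qed (auto simp: new_vars_def)
qed

lemma tval_agree: "\<forall>v\<in>tfv a. e v = e' v \<Longrightarrow> tval e a = tval e' a"
  by (induction a) auto

lemma holds_agree: "\<forall>v\<in>ffv \<phi>. e v = e' v \<Longrightarrow> holds e \<phi> = holds e' \<phi>"
proof (induction \<phi> arbitrary: e e')
  case (FEq a b)
  then show ?case using tval_agree[of a e e'] tval_agree[of b e e'] by auto
next
  case (FAll x p)
  have "holds (e(x := t)) p = holds (e'(x := t)) p" for t using FAll by (intro FAll.IH) auto
  then show ?case by simp
next
  case (FEx x p)
  have "holds (e(x := t)) p = holds (e'(x := t)) p" for t using FEx by (intro FEx.IH) auto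
  then show ?case by simp
next
  case (FAnd p q)
  have "holds e p = holds e' p" "holds e q = holds e' q"
    using FAnd.prems by (intro FAnd.IH; auto)+
  then show ?case by simp
next
  case (FOr p q)
  have "holds e p = holds e' p" "holds e q = holds e' q"
    using FOr.prems by (intro FOr.IH; auto)+
  then show ?case by simp
qed simp_all

definition std_env :: "nat \<Rightarrow> tree" where
  "std_env v = (if v \<in> range pvar then cylinder (rev (inv pvar v)) else Leaf False)"

lemma std_env_pvar [simp]: "std_env (pvar rp) = cylinder (rev rp)"
proof -
  have "inj pvar" by (auto intro: injI)
  then show ?thesis by (simp add: std_env_def)
qed

lemma canonical_std_env [simp]: "canonical (std_env v)"
  by (simp add: std_env_def)

lemma odd_upd_comp:
  fixes f :: "nat \<Rightarrow> 'a"
  shows "(\<lambda>y. (f(2 * x + 1 := t)) (2 * y + 1)) = (\<lambda>y. f (2 * y + 1))(x := t)"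
  by auto

lemma holds_tr_fm_cylinders:
  assumes "\<forall>rp. f (pvar rp) = cylinder (rev rp)" "\<forall>x. canonical (f x)" "\<forall>k\<in>fconsts \<phi>. canonical k"
  shows "holds f (tr_fm \<phi>) = holds (\<lambda>x. f (2 * x + 1)) \<phi>"
  using assms
proof (induction \<phi> arbitrary: f)
  case (FEq a b)
  have "tval f (tr_trm a) = tval (\<lambda>x. f (2 * x + 1)) a" if "\<forall>k\<in>tconsts a. canonical k" for a
    using that by (induction a) (use FEq.prems tval_tr_const_cylinders in auto)
  then show ?case using FEq.prems by simp
next
  case (FAll x p)
  have "holds (f(2 * x + 1 := t)) (tr_fm p) = holds ((\<lambda>y. f (2 * y + 1))(x := t)) p"
    if "canonical t" for t
  proof -
    have "holds (f(2 * x + 1 := t)) (tr_fm p) = holds (\<lambda>y. (f(2 * x + 1 := t)) (2 * y + 1)) p"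
      by (rule FAll.IH) (use FAll.prems that in auto)
    then show ?thesis by (simp only: odd_upd_comp)
  qed
  then show ?case by simp
next
  case (FEx x p)
  have "holds (f(2 * x + 1 := t)) (tr_fm p) = holds ((\<lambda>y. f (2 * y + 1))(x := t)) p"
    if "canonical t" for t
  proof -
    have "holds (f(2 * x + 1 := t)) (tr_fm p) = holds (\<lambda>y. (f(2 * x + 1 := t)) (2 * y + 1)) p"
      by (rule FEx.IH) (use FEx.prems that in auto)
    then show ?thesis by (simp only: odd_upd_comp)
  qed
  then show ?case by auto
qed auto

text \<open>The constants of a term or formula, in the order in which the program meets them.\<close>

fun tconst_list :: "trm \<Rightarrow> tree list" where
  "tconst_list (TVar x) = []"
| "tconst_list (TConst c) = [c]"
| "tconst_list (TJoin a b) = tconst_list a @ tconst_list b"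
| "tconst_list (TMeet a b) = tconst_list a @ tconst_list b"
| "tconst_list (TCompl a) = tconst_list a"

fun fconst_list :: "fm \<Rightarrow> tree list" where
  "fconst_list (FEq a b) = tconst_list a @ tconst_list b"
| "fconst_list (FNot p) = fconst_list p"
| "fconst_list (FAnd p q) = fconst_list p @ fconst_list q"
| "fconst_list (FOr p q) = fconst_list p @ fconst_list q"
| "fconst_list (FAll x p) = fconst_list p"
| "fconst_list (FEx x p) = fconst_list p"

lemma set_fconst_list [simp]: "set (fconst_list \<phi>) = fconsts \<phi>"
proof -
  have "set (tconst_list a) = tconsts a" for a by (induction a) auto
  then show ?thesis by (induction \<phi>) auto
qed

definition split_ax :: "bool list \<Rightarrow> fm" where
  "split_ax rp =
     FAnd (FEq (TJoin (TVar (pvar (False # rp))) (TVar (pvar (True # rp)))) (TVar (pvar rp)))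
       (FAnd (FEq (TMeet (TVar (pvar (False # rp))) (TVar (pvar (True # rp)))) (TConst (Leaf False)))
         (FAnd (FNot (FEq (TVar (pvar (False # rp))) (TConst (Leaf False))))
           (FNot (FEq (TVar (pvar (True # rp))) (TConst (Leaf False))))))"

definition root_ax :: fm where
  "root_ax = FEq (TVar (pvar [])) (TConst (Leaf True))"

fun const_axs :: "tree \<Rightarrow> bool list \<Rightarrow> fm \<Rightarrow> fm" where
  "const_axs (Leaf b) rp C = C"
| "const_axs (Node l r) rp C = const_axs r (True # rp) (const_axs l (False # rp)
  (FAnd (split_ax rp) C))"

fun const_vars :: "tree \<Rightarrow> bool list \<Rightarrow> nat list \<Rightarrow> nat list" where
  "const_vars (Leaf b) rp U = U"
| "const_vars (Node l r) rp U =
     const_vars r (True # rp) (const_vars l (False # rp) (pvar (False # rp) # pvar (True # rp) # U))"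

definition fm_axs :: "fm \<Rightarrow> fm \<Rightarrow> fm" where
  "fm_axs \<phi> C = fold (\<lambda>c. const_axs c []) (fconst_list \<phi>) C"

definition fm_vars :: "fm \<Rightarrow> nat list \<Rightarrow> nat list" where
  "fm_vars \<phi> U = fold (\<lambda>c. const_vars c []) (fconst_list \<phi>) U"

fun inner_positions :: "tree \<Rightarrow> bool list set" where
  "inner_positions (Leaf b) = {}"
| "inner_positions (Node l r) = insert [] (Cons False ` inner_positions l \<union> Cons True ` inner_positions r)"

lemma holds_const_axs:
  "holds e (const_axs c rp C) \<longleftrightarrow> holds e C \<and> (\<forall>q\<in>inner_positions c. holds e (split_ax (rev q @ rp)))"
proof (induction c arbitrary: rp C)
  case (Node l r)
  have "(\<forall>q\<in>inner_positions (Node l r). P (rev q @ rp)) \<longleftrightarrow> P rp \<and>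
      (\<forall>q\<in>inner_positions l. P (rev q @ False # rp)) \<and> (\<forall>q\<in>inner_positions r. P (rev q @ True # rp))"
    for P by (simp add: ball_Un image_iff)
  from this[of "\<lambda>x. holds e (split_ax x)"] show ?case
    unfolding const_axs.simps Node.IH holds.simps by auto
qed simp

lemma holds_fm_axs:
  "holds e (fm_axs \<phi> C) \<longleftrightarrow>
     holds e C \<and> (\<forall>c\<in>fconsts \<phi>. \<forall>q\<in>inner_positions c. holds e (split_ax (rev q)))"
proof -
  have "holds e (fold (\<lambda>c. const_axs c []) cs C) \<longleftrightarrow>
      holds e C \<and> (\<forall>c\<in>set cs. \<forall>q\<in>inner_positions c. holds e (split_ax (rev q)))" for cs
    by (induction cs arbitrary: C) (auto simp: holds_const_axs)
  then show ?thesis by (simp add: fm_axs_def)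
qed

lemma set_fm_vars: "set (fm_vars \<phi> U) = set U \<union> (\<Union>c\<in>fconsts \<phi>. below_vars c [])"
proof -
  have "set (const_vars c rp U) = set U \<union> below_vars c rp" for c rp U
    by (induction c arbitrary: rp U) auto
  then have "set (fold (\<lambda>c. const_vars c []) cs U) = set U \<union> (\<Union>c\<in>set cs. below_vars c [])" for cs
    by (induction cs arbitrary: U) auto
  then show ?thesis by (simp add: fm_vars_def)
qed

lemma ffv_fm_axs: "ffv (fm_axs \<phi> C) \<subseteq> ffv C \<union> new_vars \<phi>"
proof -
  have "ffv (const_axs c rp C) \<subseteq> ffv C \<union> insert (pvar rp) (below_vars c rp)" for c rp C
  proof (induction c arbitrary: rp C)
    case (Node l r)
    have "ffv (split_ax rp) = {pvar rp, pvar (False # rp), pvar (True # rp)}"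
      by (auto simp: split_ax_def)
    with Node show ?case by fastforce
  qed auto
  then have "ffv (fold (\<lambda>c. const_axs c []) cs C) \<subseteq> ffv C \<union> insert (pvar []) (\<Union>c\<in>set cs. below_vars c [])"
    for cs by (induction cs arbitrary: C) fastforce+
  from this[of "fconst_list \<phi>"] show ?thesis by (simp add: fm_axs_def new_vars_def)
qed

lemma fconsts_fm_axs:
  "fconsts C \<subseteq> {Leaf True, Leaf False} \<Longrightarrow> fconsts (fm_axs \<phi> C) \<subseteq> {Leaf True, Leaf False}"
proof -
  have "fconsts C \<subseteq> {Leaf True, Leaf False} \<Longrightarrow> fconsts (const_axs c rp C) \<subseteq> {Leaf True, Leaf False}"
    for c rp C by (induction c arbitrary: rp C) (auto simp: split_ax_def)
  then have "fconsts C \<subseteq> {Leaf True, Leaf False} \<Longrightarrow>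
      fconsts (fold (\<lambda>c. const_axs c []) cs C) \<subseteq> {Leaf True, Leaf False}" for cs
    by (induction cs arbitrary: C) auto
  then show "fconsts C \<subseteq> {Leaf True, Leaf False} \<Longrightarrow> ?thesis" by (simp add: fm_axs_def)
qed

lemma qfree_fm_axs: "qfree C \<Longrightarrow> qfree (fm_axs \<phi> C)"
proof -
  have "qfree C \<Longrightarrow> qfree (const_axs c rp C)" for c rp C
    by (induction c arbitrary: rp C) (auto simp: split_ax_def)
  then have "qfree C \<Longrightarrow> qfree (fold (\<lambda>c. const_axs c []) cs C)" for cs
    by (induction cs arbitrary: C) auto
  then show "qfree C \<Longrightarrow> ?thesis" by (simp add: fm_axs_def)
qed

definition splits :: "(bool list \<Rightarrow> tree) \<Rightarrow> bool list \<Rightarrow> bool" where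
  "splits A p \<longleftrightarrow> tjoin (A (p @ [False])) (A (p @ [True])) = A p \<and>
     tmeet (A (p @ [False])) (A (p @ [True])) = Leaf False \<and>
     A (p @ [False]) \<noteq> Leaf False \<and> A (p @ [True]) \<noteq> Leaf False"

lemma holds_split_ax: "holds e (split_ax (rev p)) \<longleftrightarrow> splits (\<lambda>q. e (pvar (rev q))) p"
  by (simp add: split_ax_def splits_def)

lemma holds_split_ax_std_env: "holds std_env (split_ax rp)"
  using holds_split_ax[of std_env "rev rp"] cylinder_split cylinder_neq_bot by (simp add: splits_def)

lemma holds_root_ax_std_env: "holds std_env root_ax"
  by (simp add: root_ax_def)

lemma splitting_of_splits:
  assumes "\<forall>p. canonical (A p)" "nonzero (A p)" "\<forall>q\<in>inner_positions K. splits A (p @ q)"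
  shows "splitting A K p"
  using assms(2,3)
proof (induction K arbitrary: p)
  case (Node K0 K1)
  have "splits A p" using Node.prems(2)[rule_format, of "[]"] by simp
  then have join: "tjoin (A (p @ [False])) (A (p @ [True])) = A p"
    and meet: "tmeet (A (p @ [False])) (A (p @ [True])) = Leaf False"
    and nz: "nonzero (A (p @ [False]))" "nonzero (A (p @ [True]))"
    using assms(1) by (auto simp: splits_def nonzero_def)
  have "\<forall>w. den (A (p @ [False])) w \<or> den (A (p @ [True])) w \<longleftrightarrow> den (A p) w"
    using join by (metis den_tjoin)
  moreover have "\<forall>w. \<not> (den (A (p @ [False])) w \<and> den (A (p @ [True])) w)"
    using meet by (metis den_tmeet den.simps(1))
  moreover have "splitting A K0 (p @ [False])" "splitting A K1 (p @ [True])"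
    using Node.prems(2) nz by (auto intro!: Node.IH)
  ultimately show ?case using Node.prems(1) by simp
qed simp

fun fits :: "tree \<Rightarrow> tree \<Rightarrow> bool" where
  "fits (Leaf b) K = True"
| "fits (Node l r) (Leaf b) = False"
| "fits (Node l r) (Node K0 K1) = (fits l K0 \<and> fits r K1)"

fun merge :: "tree \<Rightarrow> tree \<Rightarrow> tree" where
  "merge (Leaf b) k = k"
| "merge (Node a b) (Leaf x) = Node a b"
| "merge (Node a b) (Node c d) = Node (merge a c) (merge b d)"

lemma common_shape_exists:
  "finite S \<Longrightarrow> \<exists>K. (\<forall>c\<in>S. fits c K) \<and> inner_positions K \<subseteq> (\<Union>c\<in>S. inner_positions c)"
proof (induction S rule: finite_induct)
  case empty
  then show ?case by (intro exI[of _ "Leaf True"]) auto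
next
  case (insert c S)
  have "fits c c" for c by (induction c) auto
  then have "fits c (merge c k)" for c k by (induction c k rule: merge.induct) auto
  moreover have "fits c k \<Longrightarrow> fits c (merge c' k)" for c c' k
    by (induction c' k arbitrary: c rule: merge.induct) (auto elim: fits.elims)
  moreover have "inner_positions (merge a b) = inner_positions a \<union> inner_positions b" for a b
    by (induction a b rule: merge.induct) auto
  moreover obtain K where "\<forall>c\<in>S. fits c K" "inner_positions K \<subseteq> (\<Union>c\<in>S. inner_positions c)"
    using insert.IH by blast
  ultimately show ?case by (intro exI[of _ "merge c K"]) auto
qed

lemma finite_fconsts: "finite (fconsts \<phi>)"
  by (simp flip: set_fconst_list)

lemma positions_Nil [simp]: "[] \<in> positions K"
  by (cases K) auto

lemma below_vars_positions:
  "fits c K \<Longrightarrow> v \<in> below_vars c rp \<Longrightarrow> \<exists>q\<in>positions K. v = pvar (rev q @ rp)"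
proof (induction c arbitrary: K rp)
  case (Node l r)
  then obtain K0 K1 where K: "K = Node K0 K1" "fits l K0" "fits r K1" by (cases K) auto
  from Node.prems(2) consider "v = pvar (False # rp)" | "v = pvar (True # rp)"
    | "v \<in> below_vars l (False # rp)" | "v \<in> below_vars r (True # rp)" by auto
  then show ?case
  proof cases
    case 1
    then show ?thesis using K(1) by (intro bexI[of _ "[False]"]) auto
  next
    case 2
    then show ?thesis using K(1) by (intro bexI[of _ "[True]"]) auto
  next
    case 3
    then obtain q where "q \<in> positions K0" "v = pvar (rev q @ False # rp)" using Node.IH(1) K(2) by blast
    then show ?thesis using K(1) by (intro bexI[of _ "False # q"]) auto
  next
    case 4
    then obtain q where "q \<in> positions K1" "v = pvar (rev q @ True # rp)" using Node.IH(2) K(3) by blast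
    then show ?thesis using K(1) by (intro bexI[of _ "True # q"]) auto
  qed
qed simp

lemma cantor_homeo_of_axioms:
  assumes can: "\<forall>x. canonical (e x)" and root: "holds e root_ax"
    and axs: "\<forall>q\<in>inner_positions K. holds e (split_ax (rev q))"
  defines "A \<equiv> \<lambda>p. e (pvar (rev p))"
  shows "cantor_homeo (zoom_split A K []) (unzoom_split A K [])"
    and "\<forall>p\<in>positions K. cantor_homeo.transport (zoom_split A K []) (cylinder p) = A p"
proof -
  have A0: "A [] = Leaf True" using root by (simp add: A_def root_ax_def)
  have split: "splitting A K []"
    using can axs A0 by (intro splitting_of_splits) (auto simp: A_def nonzero_def holds_split_ax)
  show homeo: "cantor_homeo (zoom_split A K []) (unzoom_split A K [])"
  proof
    show "cantor_cont (zoom_split A K [])" by (rule cantor_cont_zoom_split)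
    show "cantor_cont (unzoom_split A K [])" by (rule cantor_cont_unzoom_split)
    show "zoom_split A K [] (unzoom_split A K [] v) = v" for v
      by (rule zoom_split_unzoom_split[OF split])
    show "unzoom_split A K [] (zoom_split A K [] w) = w" for w
      using unzoom_split_zoom_split[OF split] A0 by simp
  qed
  show "\<forall>p\<in>positions K. cantor_homeo.transport (zoom_split A K []) (cylinder p) = A p"
  proof
    fix p assume "p \<in> positions K"
    then have "den (A p) w = den (cylinder p) (zoom_split A K [] w)" for w
      using zoom_split_prefix[OF split, of p w] A0 by simp
    then show "cantor_homeo.transport (zoom_split A K []) (cylinder p) = A p"
      using cantor_homeo.transport_eqI[OF homeo] can by (simp add: A_def)
  qed
qed

theorem tr_fm_correct:
  assumes can: "\<forall>x. canonical (e x)" and ax: "holds e (fm_axs \<Phi> root_ax)"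
    and const_can: "\<forall>k\<in>fconsts \<Phi>. canonical k" and sen: "sentence \<Phi>"
  shows "holds e (tr_fm \<Phi>) \<longleftrightarrow> models_B \<Phi>"
proof -
  obtain K where K: "\<forall>c\<in>fconsts \<Phi>. fits c K" "inner_positions K \<subseteq> (\<Union>c\<in>fconsts \<Phi>. inner_positions c)"
    using common_shape_exists[OF finite_fconsts] by blast
  define G where "G = zoom_split (\<lambda>p. e (pvar (rev p))) K []"
  have "holds e root_ax" "\<forall>q\<in>inner_positions K. holds e (split_ax (rev q))"
    using ax K(2) by (auto simp: holds_fm_axs)
  then have homeo: "cantor_homeo G (unzoom_split (\<lambda>p. e (pvar (rev p))) K [])"
    and cylinders: "\<forall>p\<in>positions K. cantor_homeo.transport G (cylinder p) = e (pvar (rev p))"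
    using cantor_homeo_of_axioms[OF can] unfolding G_def by auto
  interpret cantor_homeo G "unzoom_split (\<lambda>p. e (pvar (rev p))) K []" by (rule homeo)
  have transport_std: "transport (std_env v) = e v" if "v \<in> ffv (tr_fm \<Phi>)" for v
  proof -
    have "v \<in> new_vars \<Phi>" using that ffv_tr_fm[of \<Phi>] sen by (auto simp: sentence_def)
    then obtain p where "p \<in> positions K" "v = pvar (rev p)"
      using K(1) below_vars_positions[of _ K _ "[]"] by (fastforce simp: new_vars_def)
    then show ?thesis using cylinders by simp
  qed
  then have "holds e (tr_fm \<Phi>) = holds (\<lambda>v. transport (std_env v)) (tr_fm \<Phi>)"
    by (intro holds_agree) auto
  also have "\<dots> = holds std_env (tr_fm \<Phi>)"
    by (rule holds_transport) (simp_all add: fconsts_tr_fm)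
  also have "\<dots> = holds (\<lambda>x. std_env (2 * x + 1)) \<Phi>"
    by (rule holds_tr_fm_cylinders) (simp_all add: const_can)
  also have "\<dots> = models_B \<Phi>"
    unfolding models_B_def by (rule holds_agree) (use sen in \<open>simp add: sentence_def\<close>)
  finally show ?thesis .
qed

section \<open>The output sentence\<close>

fun matrix :: "fm \<Rightarrow> fm" where
  "matrix (FAll x p) = matrix p"
| "matrix (FEx x p) = matrix p"
| "matrix p = p"

fun starts_forall :: "fm \<Rightarrow> bool" where
  "starts_forall (FAll x p) = True"
| "starts_forall p = False"

fun prefix_vars :: "fm \<Rightarrow> nat set" where
  "prefix_vars (FAll x p) = insert x (prefix_vars p)"
| "prefix_vars (FEx x p) = insert x (prefix_vars p)"
| "prefix_vars p = {}"

definition quant :: "bool \<Rightarrow> nat \<Rightarrow> fm \<Rightarrow> fm" where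
  "quant q = (if q then FAll else FEx)"

fun reprefix :: "fm \<Rightarrow> fm \<Rightarrow> fm" where
  "reprefix M (FAll x p) = FAll (2 * x + 1) (reprefix M p)"
| "reprefix M (FEx x p) = FEx (2 * x + 1) (reprefix M p)"
| "reprefix M p = M"

definition guarded :: "bool \<Rightarrow> fm \<Rightarrow> fm \<Rightarrow> fm" where
  "guarded q C \<psi> = (if q then FOr (FNot C) \<psi> else FAnd C \<psi>)"

definition translate :: "fm \<Rightarrow> fm" where
  "translate \<Phi> =
     fold (quant (starts_forall \<Phi>)) (fm_vars \<Phi> [pvar []])
       (reprefix (guarded (starts_forall \<Phi>) (fm_axs \<Phi> root_ax) (tr_fm (matrix \<Phi>))) \<Phi>)"

lemma qfree_matrix: "prenex \<phi> \<Longrightarrow> qfree (matrix \<phi>)"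
  by (induction rule: prenex.induct) (case_tac p; auto)+

lemma fconst_list_matrix [simp]: "fconst_list (matrix \<phi>) = fconst_list \<phi>"
  by (induction \<phi>) auto

lemma fconsts_matrix [simp]: "fconsts (matrix \<phi>) = fconsts \<phi>"
  by (metis fconst_list_matrix set_fconst_list)

lemma ffv_prenex: "prenex \<phi> \<Longrightarrow> ffv \<phi> = ffv (matrix \<phi>) - prefix_vars \<phi>"
  by (induction rule: prenex.induct) (case_tac p; auto)+

lemma ffv_reprefix: "prenex \<phi> \<Longrightarrow> ffv (reprefix M \<phi>) = ffv M - (\<lambda>x. 2 * x + 1) ` prefix_vars \<phi>"
  by (induction rule: prenex.induct) (case_tac p; auto)+

lemma tr_fm_reprefix: "prenex \<phi> \<Longrightarrow> tr_fm \<phi> = reprefix (tr_fm (matrix \<phi>)) \<phi>"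
  by (induction rule: prenex.induct) (case_tac p; auto)+

lemma fconsts_reprefix: "prenex \<phi> \<Longrightarrow> fconsts (reprefix M \<phi>) = fconsts M"
  by (induction rule: prenex.induct) (case_tac p; auto)+

lemma prenex_reprefix: "prenex \<phi> \<Longrightarrow> qfree M \<Longrightarrow> prenex (reprefix M \<phi>)"
  by (induction rule: prenex.induct) (case_tac p; auto intro: prenex.intros)+

lemma qprefix_reprefix: "prenex \<phi> \<Longrightarrow> qprefix (reprefix (guarded q C \<psi>) \<phi>) = qprefix \<phi>"
  by (induction rule: prenex.induct) (case_tac p; auto simp: guarded_def)+

lemma prenex_fold_quant: "prenex \<phi> \<Longrightarrow> prenex (fold (quant q) Us \<phi>)"
proof (induction Us arbitrary: \<phi>)
  case (Cons u Us)
  then show ?case by (simp add: quant_def prenex.intros)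
qed simp

lemma ffv_fold_quant: "ffv (fold (quant q) Us \<phi>) = ffv \<phi> - set Us"
  by (induction Us arbitrary: \<phi>) (auto simp: quant_def)

lemma fconsts_fold_quant: "fconsts (fold (quant q) Us \<phi>) = fconsts \<phi>"
  by (induction Us arbitrary: \<phi>) (auto simp: quant_def)

lemma qprefix_fold_quant: "qprefix (fold (quant q) Us \<phi>) = replicate (length Us) q @ qprefix \<phi>"
  by (induction Us arbitrary: \<phi>) (auto simp: quant_def replicate_app_Cons_same)

lemma switches_replicate: "l = [] \<or> hd l = q \<Longrightarrow> switches (replicate n q @ l) = switches l"
proof (induction n)
  case (Suc n)
  then show ?case by (cases n; cases l) auto
qed simp

lemma qprefix_hd: "prenex \<Phi> \<Longrightarrow> qprefix \<Phi> = [] \<or> hd (qprefix \<Phi>) = starts_forall \<Phi>"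
  by (cases \<Phi>) (auto elim: prenex.cases)

lemma holds_fold_ex:
  "holds e (fold (quant False) Us \<phi>) \<longleftrightarrow> (\<exists>f. (\<forall>v. canonical (f v)) \<and> holds (override_on e f (set Us)) \<phi>)"
proof (induction Us arbitrary: \<phi>)
  case Nil
  show ?case by (auto intro!: exI[of _ "\<lambda>_. Leaf False"])
next
  case (Cons u Us)
  have "holds e (fold (quant False) (u # Us) \<phi>) \<longleftrightarrow>
      (\<exists>f. (\<forall>v. canonical (f v)) \<and> holds (override_on e f (set Us)) (FEx u \<phi>))"
    using Cons.IH by (simp add: quant_def)
  also have "\<dots> \<longleftrightarrow> (\<exists>f. (\<forall>v. canonical (f v)) \<and> holds (override_on e f (set (u # Us))) \<phi>)"
  proof
    assume "\<exists>f. (\<forall>v. canonical (f v)) \<and> holds (override_on e f (set Us)) (FEx u \<phi>)"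
    then obtain f t where f: "\<forall>v. canonical (f v)" "canonical t"
      "holds ((override_on e f (set Us))(u := t)) \<phi>" by auto
    have "(override_on e f (set Us))(u := t) = override_on e (f(u := t)) (set (u # Us))"
      by (auto simp: override_on_def)
    then show "\<exists>f. (\<forall>v. canonical (f v)) \<and> holds (override_on e f (set (u # Us))) \<phi>"
      using f by (intro exI[of _ "f(u := t)"]) auto
  next
    assume "\<exists>f. (\<forall>v. canonical (f v)) \<and> holds (override_on e f (set (u # Us))) \<phi>"
    then obtain f where f: "\<forall>v. canonical (f v)" "holds (override_on e f (set (u # Us))) \<phi>" by auto
    have "(override_on e f (set Us))(u := f u) = override_on e f (set (u # Us))"
      by (auto simp: override_on_def)
    then show "\<exists>f. (\<forall>v. canonical (f v)) \<and> holds (override_on e f (set Us)) (FEx u \<phi>)"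
      using f by (intro exI[of _ f]) (auto intro!: exI[of _ "f u"])
  qed
  finally show ?case .
qed

lemma holds_fold_all:
  "holds e (fold (quant True) Us \<phi>) \<longleftrightarrow> (\<forall>f. (\<forall>v. canonical (f v)) \<longrightarrow> holds (override_on e f (set Us)) \<phi>)"
proof (induction Us arbitrary: \<phi>)
  case Nil
  show ?case by (auto intro: exI[of _ "\<lambda>_. Leaf False"])
next
  case (Cons u Us)
  have "holds e (fold (quant True) (u # Us) \<phi>) \<longleftrightarrow>
      (\<forall>f. (\<forall>v. canonical (f v)) \<longrightarrow> holds (override_on e f (set Us)) (FAll u \<phi>))"
    using Cons.IH by (simp add: quant_def)
  also have "\<dots> \<longleftrightarrow> (\<forall>f. (\<forall>v. canonical (f v)) \<longrightarrow> holds (override_on e f (set (u # Us))) \<phi>)"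
  proof
    assume A: "\<forall>f. (\<forall>v. canonical (f v)) \<longrightarrow> holds (override_on e f (set Us)) (FAll u \<phi>)"
    show "\<forall>f. (\<forall>v. canonical (f v)) \<longrightarrow> holds (override_on e f (set (u # Us))) \<phi>"
    proof (intro allI impI)
      fix f :: "nat \<Rightarrow> tree" assume f: "\<forall>v. canonical (f v)"
      have "(override_on e f (set Us))(u := f u) = override_on e f (set (u # Us))"
        by (auto simp: override_on_def)
      moreover have "holds ((override_on e f (set Us))(u := f u)) \<phi>" using A f by simp
      ultimately show "holds (override_on e f (set (u # Us))) \<phi>" by simp
    qed
  next
    assume A: "\<forall>f. (\<forall>v. canonical (f v)) \<longrightarrow> holds (override_on e f (set (u # Us))) \<phi>"
    show "\<forall>f. (\<forall>v. canonical (f v)) \<longrightarrow> holds (override_on e f (set Us)) (FAll u \<phi>)"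
    proof (intro allI impI)
      fix f :: "nat \<Rightarrow> tree" assume f: "\<forall>v. canonical (f v)"
      have "holds ((override_on e f (set Us))(u := t)) \<phi>" if "canonical t" for t
      proof -
        have "(override_on e f (set Us))(u := t) = override_on e (f(u := t)) (set (u # Us))"
          by (auto simp: override_on_def)
        then show ?thesis using A f that by auto
      qed
      then show "holds (override_on e f (set Us)) (FAll u \<phi>)" by simp
    qed
  qed
  finally show ?case .
qed

lemma holds_reprefix_guarded:
  assumes "prenex \<phi>" "\<forall>x\<in>prefix_vars \<phi>. 2 * x + 1 \<notin> ffv C"
  shows "holds e (reprefix (guarded q C \<psi>) \<phi>) \<longleftrightarrow>
    (if q then holds e C \<longrightarrow> holds e (reprefix \<psi> \<phi>) else holds e C \<and> holds e (reprefix \<psi> \<phi>))"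
  using assms
proof (induction \<phi> arbitrary: e rule: prenex.induct)
  case (1 p)
  then show ?case by (cases p) (auto simp: guarded_def)
next
  case (2 p x)
  have "holds (e(2 * x + 1 := t)) C = holds e C" for t using 2 by (intro holds_agree) auto
  then show ?case using 2 canonical.simps(1) by (simp; blast)
next
  case (3 p x)
  have "holds (e(2 * x + 1 := t)) C = holds e C" for t using 3 by (intro holds_agree) auto
  then show ?case using 3 canonical.simps(1) by (simp; blast)
qed

lemma sentence_translate: "sentence \<Phi> \<Longrightarrow> prenex \<Phi> \<Longrightarrow> sentence (translate \<Phi>)"
proof -
  assume sen: "sentence \<Phi>" and pr: "prenex \<Phi>"
  have "ffv (matrix \<Phi>) \<subseteq> prefix_vars \<Phi>"
    using ffv_prenex[OF pr] sen by (auto simp: sentence_def)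
  have "ffv (tr_fm (matrix \<Phi>)) \<subseteq> (\<lambda>x. 2 * x + 1) ` ffv (matrix \<Phi>) \<union> new_vars \<Phi>"
    using ffv_tr_fm[of "matrix \<Phi>"] by (simp add: new_vars_def)
  also have "\<dots> \<subseteq> (\<lambda>x. 2 * x + 1) ` prefix_vars \<Phi> \<union> new_vars \<Phi>"
    using \<open>ffv (matrix \<Phi>) \<subseteq> prefix_vars \<Phi>\<close> by blast
  finally have "ffv (tr_fm (matrix \<Phi>)) \<subseteq> (\<lambda>x. 2 * x + 1) ` prefix_vars \<Phi> \<union> new_vars \<Phi>" .
  moreover have "ffv (fm_axs \<Phi> root_ax) \<subseteq> new_vars \<Phi>"
    using ffv_fm_axs[of \<Phi> root_ax] by (auto simp: root_ax_def new_vars_def)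
  moreover have "set (fm_vars \<Phi> [pvar []]) = new_vars \<Phi>"
    by (simp add: set_fm_vars new_vars_def)
  ultimately show ?thesis
    unfolding sentence_def translate_def ffv_fold_quant ffv_reprefix[OF pr]
    by (auto simp: guarded_def)
qed

lemma prenex_translate: "prenex \<Phi> \<Longrightarrow> prenex (translate \<Phi>)"
  unfolding translate_def
  by (intro prenex_fold_quant prenex_reprefix)
    (auto simp: guarded_def qfree_tr_fm qfree_matrix intro!: qfree_fm_axs simp: root_ax_def)

lemma fconsts_translate: "prenex \<Phi> \<Longrightarrow> fconsts (translate \<Phi>) \<subseteq> {Leaf True, Leaf False}"
  unfolding translate_def fconsts_fold_quant
  using fconsts_fm_axs[of root_ax \<Phi>] fconsts_tr_fm[of "matrix \<Phi>"]
  by (auto simp: fconsts_reprefix guarded_def root_ax_def)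

lemma alternations_translate: "prenex \<Phi> \<Longrightarrow> alternations (translate \<Phi>) = alternations \<Phi>"
  unfolding alternations_def translate_def qprefix_fold_quant
  by (simp add: qprefix_reprefix switches_replicate qprefix_hd)

text \<open>Any model of the splitting axioms decides the translated matrix as \<open>\<Phi>\<close> is decided in \<open>B\<close>,
  and \<open>std_env\<close> provides such a model; so binding the new variables by either quantifier
  preserves truth.\<close>

lemma models_B_translate:
  assumes sen: "sentence \<Phi>" and pr: "prenex \<Phi>" and const_can: "\<forall>k\<in>fconsts \<Phi>. canonical k"
  shows "models_B (translate \<Phi>) \<longleftrightarrow> models_B \<Phi>"
proof -
  define C where "C = fm_axs \<Phi> root_ax"
  define q where "q = starts_forall \<Phi>"
  define E where "E f = override_on (\<lambda>_. Leaf False) f (set (fm_vars \<Phi> [pvar []]))" for f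
  have canE: "\<forall>v. canonical (f v) \<Longrightarrow> \<forall>v. canonical (E f v)" for f
    by (simp add: E_def override_on_def)
  have fvC: "ffv C \<subseteq> set (fm_vars \<Phi> [pvar []])"
    using ffv_fm_axs[of \<Phi> root_ax] by (auto simp: C_def root_ax_def new_vars_def set_fm_vars)
  have indep: "\<forall>x\<in>prefix_vars \<Phi>. 2 * x + 1 \<notin> ffv C"
    using ffv_fm_axs[of \<Phi> root_ax] even_new_vars by (fastforce simp: C_def root_ax_def)
  have correct: "holds (E f) C \<Longrightarrow> holds (E f) (reprefix (tr_fm (matrix \<Phi>)) \<Phi>) \<longleftrightarrow> models_B \<Phi>"
    if "\<forall>v. canonical (f v)" for f
    using tr_fm_correct[OF canE[OF that] _ const_can sen] tr_fm_reprefix[OF pr] by (simp add: C_def)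
  have witness: "holds (E std_env) C"
  proof -
    have "holds std_env C"
      by (simp add: C_def holds_fm_axs holds_root_ax_std_env holds_split_ax_std_env)
    moreover have "\<forall>v\<in>ffv C. E std_env v = std_env v"
      using fvC by (auto simp: E_def override_on_def)
    ultimately show ?thesis using holds_agree by metis
  qed
  have "models_B (translate \<Phi>) \<longleftrightarrow>
      (if q then \<forall>f. (\<forall>v. canonical (f v)) \<longrightarrow> holds (E f) (reprefix (guarded q C (tr_fm (matrix \<Phi>))) \<Phi>)
       else \<exists>f. (\<forall>v. canonical (f v)) \<and> holds (E f) (reprefix (guarded q C (tr_fm (matrix \<Phi>))) \<Phi>))"
    by (simp add: models_B_def translate_def holds_fold_ex holds_fold_all E_def C_def q_def)
  also have "\<dots> \<longleftrightarrow> models_B \<Phi>"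
  proof (cases q)
    case True
    have "(\<forall>f. (\<forall>v. canonical (f v)) \<longrightarrow> holds (E f) C \<longrightarrow> holds (E f) (reprefix (tr_fm (matrix \<Phi>)) \<Phi>))
        \<longleftrightarrow> models_B \<Phi>"
      using correct witness canonical_std_env by blast
    with True show ?thesis by (simp add: holds_reprefix_guarded[OF pr indep])
  next
    case False
    have "(\<exists>f. (\<forall>v. canonical (f v)) \<and> holds (E f) C \<and> holds (E f) (reprefix (tr_fm (matrix \<Phi>)) \<Phi>))
        \<longleftrightarrow> models_B \<Phi>"
      using correct witness canonical_std_env by blast
    with False show ?thesis by (simp add: holds_reprefix_guarded[OF pr indep])
  qed
  finally show ?thesis .
qed

section \<open>Structured programs over the WHILE language\<close>

type_synonym state = "nat \<Rightarrow> dat"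

abbreviation dT :: dat where "dT \<equiv> DCons DNil DNil"

datatype scom = SA nat exp | SS scom scom | SIF nat exp scom | SIFE nat nat exp scom scom

fun compile :: "scom \<Rightarrow> com" where
  "compile (SA x e) = Assign x e"
| "compile (SS a b) = Seq (compile a) (compile b)"
| "compile (SIF f b c) = Seq (Assign f b) (While (EVar f) (Seq (compile c) (Assign f ENil)))"
| "compile (SIFE f g b c1 c2) = Seq (Assign f b) (Seq (Assign g (EIsNil (EVar f)))
     (Seq (While (EVar f) (Seq (compile c1) (Assign f ENil))) (While (EVar g) (Seq (compile c2) (Assign g ENil)))))"

fun modified :: "scom \<Rightarrow> nat set" where
  "modified (SA x e) = {x}"
| "modified (SS a b) = modified a \<union> modified b"
| "modified (SIF f b c) = insert f (modified c)"
| "modified (SIFE f g b c1 c2) = {f, g} \<union> modified c1 \<union> modified c2"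

fun wf_scom :: "scom \<Rightarrow> bool" where
  "wf_scom (SA x e) = True"
| "wf_scom (SS a b) = (wf_scom a \<and> wf_scom b)"
| "wf_scom (SIF f b c) = wf_scom c"
| "wf_scom (SIFE f g b c1 c2) = (f \<noteq> g \<and> g \<notin> modified c1 \<and> wf_scom c1 \<and> wf_scom c2)"

fun sem :: "scom \<Rightarrow> state \<Rightarrow> state" where
  "sem (SA x e) s = s(x := eval s e)"
| "sem (SS a b) s = sem b (sem a s)"
| "sem (SIF f b c) s = (if eval s b \<noteq> DNil then (sem c (s(f := eval s b)))(f := DNil)
  else s(f := DNil))"
| "sem (SIFE f g b c1 c2) s = (if eval s b \<noteq> DNil
     then (sem c1 (s(f := eval s b, g := DNil)))(f := DNil)
     else (sem c2 (s(f := DNil, g := DCons DNil DNil)))(g := DNil))"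

fun stime :: "scom \<Rightarrow> state \<Rightarrow> nat" where
  "stime (SA x e) s = 1 + etime e"
| "stime (SS a b) s = stime a s + stime b (sem a s)"
| "stime (SIF f b c) s = (if eval s b \<noteq> DNil then 1 + etime b + 2 + stime c (s(f := eval s b)) + 2 + 2
     else 1 + etime b + 2)"
| "stime (SIFE f g b c1 c2) s = (if eval s b \<noteq> DNil
     then 1 + etime b + 3 + 2 + stime c1 (s(f := eval s b, g := DNil)) + 2 + 2 + 2
     else 1 + etime b + 3 + 2 + 2 + stime c2 (s(f := DNil, g := DCons DNil DNil)) + 2 + 2)"

fun cost :: "scom \<Rightarrow> nat" where
  "cost (SA x e) = 1 + etime e"
| "cost (SS a b) = cost a + cost b"
| "cost (SIF f b c) = 7 + etime b + cost c"
| "cost (SIFE f g b c1 c2) = 13 + etime b + cost c1 + cost c2"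

lemma stime_cost: "stime c s \<le> cost c"
  by (induction c arbitrary: s) (auto simp: add_mono intro: le_SucI trans_le_add1 trans_le_add2)

lemma sem_modified: "x \<notin> modified c \<Longrightarrow> sem c s x = s x"
  by (induction c arbitrary: s) auto

lemma exec_assign_nil: "exec (Assign f ENil) s 2 (s(f := DNil))"
  using exec.intros(1)[of f ENil s] by (simp add: numeral_2_eq_2)

lemma exec_loop_skip: "s f = DNil \<Longrightarrow> exec (While (EVar f) c) s 2 s"
  using exec.intros(3)[of s "EVar f" c] by (simp add: numeral_2_eq_2)

lemma exec_loop_once:
  assumes "s f \<noteq> DNil" "exec c s t s'"
  shows "exec (While (EVar f) (Seq c (Assign f ENil))) s (t + 6) (s'(f := DNil))"
proof -
  have "exec (Seq c (Assign f ENil)) s (t + 2) (s'(f := DNil))"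
    by (rule exec.intros(2)[OF assms(2) exec_assign_nil])
  from exec.intros(4)[of s "EVar f", OF _ this exec_loop_skip] assms(1) show ?thesis
    by (simp add: numeral_eq_Suc)
qed

lemma exec_compile: "wf_scom c \<Longrightarrow> exec (compile c) s (stime c s) (sem c s)"
proof (induction c arbitrary: s)
  case (SA x e)
  show ?case by (simp only: compile.simps sem.simps stime.simps) (rule exec.intros(1))
next
  case (SS a b)
  then show ?case by (auto intro: exec.intros(2))
next
  case (SIF f b c)
  show ?case
  proof (cases "eval s b = DNil")
    case True
    have "exec (While (EVar f) (Seq (compile c) (Assign f ENil))) (s(f := eval s b)) 2 (s(f := eval s b))"
      using True by (intro exec_loop_skip) simp
    from exec.intros(2)[OF exec.intros(1) this] True show ?thesis by (simp add: fun_upd_def)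
  next
    case False
    from exec.intros(2)[OF exec.intros(1)[of f b s] exec_loop_once[of "s(f := eval s b)" f, OF _ SIF.IH]]
      False SIF.prems show ?thesis by (simp add: fun_upd_def numeral_eq_Suc)
  qed
next
  case (SIFE f g b c1 c2)
  then have fg: "f \<noteq> g" "g \<notin> modified c1" "wf_scom c1" "wf_scom c2" by auto
  let ?s1 = "s(f := eval s b)"
  let ?s2 = "?s1(g := eval ?s1 (EIsNil (EVar f)))"
  have e2: "exec (Assign g (EIsNil (EVar f))) ?s1 3 ?s2"
    using exec.intros(1)[of g "EIsNil (EVar f)" ?s1] by (simp add: numeral_3_eq_3)
  show ?case
  proof (cases "eval s b = DNil")
    case True
    have s2: "?s2 = s(f := DNil, g := dT)" using True fg by (auto simp: fun_upd_def)
    have l1: "exec (While (EVar f) (Seq (compile c1) (Assign f ENil))) ?s2 2 ?s2"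
      using fg True by (intro exec_loop_skip) (simp add: s2)
    have l2: "exec (While (EVar g) (Seq (compile c2) (Assign g ENil))) ?s2
        (stime c2 (s(f := DNil, g := dT)) + 6) ((sem c2 (s(f := DNil, g := dT)))(g := DNil))"
      unfolding s2 by (rule exec_loop_once[OF _ SIFE.IH(2)[OF fg(4)]]) simp
    from exec.intros(2)[OF exec.intros(1)[of f b s] exec.intros(2)[OF e2 exec.intros(2)[OF l1 l2]]] True
    show ?thesis
      by (simp add: s2 fun_upd_def numeral_eq_Suc)
  next
    case False
    have s2: "?s2 = s(f := eval s b, g := DNil)" using False fg by (auto simp: fun_upd_def)
    let ?t = "sem c1 (s(f := eval s b, g := DNil))"
    have l1: "exec (While (EVar f) (Seq (compile c1) (Assign f ENil))) ?s2
        (stime c1 (s(f := eval s b, g := DNil)) + 6) (?t(f := DNil))"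
      unfolding s2 using False fg by (intro exec_loop_once[OF _ SIFE.IH(1)[OF fg(3)]]) simp
    have l2: "exec (While (EVar g) (Seq (compile c2) (Assign g ENil))) (?t(f := DNil)) 2 (?t(f := DNil))"
      using fg sem_modified[of g c1] by (intro exec_loop_skip) simp
    from exec.intros(2)[OF exec.intros(1)[of f b s] exec.intros(2)[OF e2 exec.intros(2)[OF l1 l2]]] False
    show ?thesis
      by (simp add: s2 fun_upd_def numeral_eq_Suc)
  qed
qed

inductive steps :: "exp \<Rightarrow> com \<Rightarrow> state \<Rightarrow> nat \<Rightarrow> state \<Rightarrow> bool" where
  steps_refl: "steps b c s 0 s"
| steps_step: "eval s b \<noteq> DNil \<Longrightarrow> exec c s t1 s1 \<Longrightarrow> steps b c s1 t2 s2 \<Longrightarrow> steps b c s (1 + etime b + t1 + t2) s2"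

lemma steps_trans: "steps b c s t1 s1 \<Longrightarrow> steps b c s1 t2 s2 \<Longrightarrow> steps b c s (t1 + t2) s2"
proof (induction rule: steps.induct)
  case (steps_refl b c s) then show ?case by simp
next
  case (steps_step s b c t1 s1 t2 s2)
  then show ?case using steps.steps_step[of s b c t1 s1 "t2 + _"] by (simp add: add.assoc)
qed

lemma steps_one: "eval s b \<noteq> DNil \<Longrightarrow> exec c s t s1 \<Longrightarrow> steps b c s (1 + etime b + t) s1"
  using steps_step[OF _ _ steps_refl] by fastforce

lemma steps_while: "steps b c s t s' \<Longrightarrow> eval s' b = DNil \<Longrightarrow> exec (While b c) s (t + 1 + etime b) s'"
proof (induction rule: steps.induct)
  case (steps_refl b c s) then show ?case using exec.intros(3)[of s b c] by (simp add: numeral_2_eq_2 numeral_3_eq_3)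
next
  case (steps_step s b c t1 s1 t2 s2)
  then show ?case using exec.intros(4)[of s b c t1 s1 "t2 + 1 + etime b" s2] by (simp add: algebra_simps)
qed

section \<open>The translating program\<close>

fun tag :: "nat \<Rightarrow> dat" where
  "tag 0 = DCons dT DNil"
| "tag (Suc k) = DCons DNil (tag k)"

fun lit :: "dat \<Rightarrow> exp" where
  "lit DNil = ENil"
| "lit (DCons a b) = ECons (lit a) (lit b)"

lemma eval_lit[simp]: "eval s (lit d) = d" by (induction d) auto

fun tls :: "nat \<Rightarrow> exp \<Rightarrow> exp" where
  "tls 0 e = e"
| "tls (Suc n) e = ETl (tls n e)"

definition task :: "nat \<Rightarrow> exp \<Rightarrow> exp" where "task k p = ECons (lit (tag k)) p"
lemma eval_task[simp]: "eval s (task k p) = DCons (tag k) (eval s p)" by (simp add: task_def)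

definition sel :: "nat \<Rightarrow> exp" where "sel k = EHd (tls k (EVar 8))"

definition code_fm :: scom where
  "code_fm = SIFE 11 12 (ETl (EHd (EVar 9)))
     (SA 2 (ECons (task 0 (EHd (ETl (EVar 9)))) (ECons (task 0 (ETl (ETl (EVar 9))))
       (ECons (task 4 (EHd (EVar 9))) (EVar 2)))))
     (SIFE 13 14 (EHd (EVar 9))
        (SA 2 (ECons (task 0 (ETl (EVar 9))) (ECons (task 3 (EHd (EVar 9))) (EVar 2))))
        (SA 2 (ECons (task 1 (EHd (ETl (EVar 9)))) (ECons (task 1 (ETl (ETl (EVar 9))))
          (ECons (task 4 (EHd (EVar 9))) (EVar 2))))))"

definition code_trm :: scom where
  "code_trm = SIFE 11 12 (tls 3 (EHd (EVar 9)))
     (SA 2 (ECons (task 1 (ETl (EVar 9))) (ECons (task 3 (EHd (EVar 9))) (EVar 2))))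
     (SIFE 13 14 (ETl (EHd (EVar 9)))
        (SA 2 (ECons (task 1 (EHd (ETl (EVar 9)))) (ECons (task 1 (ETl (ETl (EVar 9))))
          (ECons (task 4 (EHd (EVar 9))) (EVar 2)))))
        (SIFE 15 16 (EHd (EVar 9))
           (SA 2 (ECons (task 2 (ECons (ETl (EVar 9)) (lit (DCons dT DNil)))) (EVar 2)))
           (SA 3 (ECons (ECons ENil (ECons (lit dT) (ETl (EVar 9)))) (EVar 3)))))"

definition e_var :: "exp \<Rightarrow> exp" where "e_var v = ECons ENil v"
definition e_bot :: exp where "e_bot = lit (enc_trm (TConst (Leaf False)))"
definition e_node2 :: "nat \<Rightarrow> exp \<Rightarrow> exp \<Rightarrow> exp" where "e_node2 k a b = ECons (lit (tg k)) (ECons a b)"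
definition e_node1 :: "nat \<Rightarrow> exp \<Rightarrow> exp" where "e_node1 k a = ECons (lit (tg k)) a"

definition e_split_ax :: "exp \<Rightarrow> exp" where
  "e_split_ax X = (let v0 = e_var (ECons ENil (ECons ENil X)); v1 = e_var (ECons ENil
    (ECons (lit dT) X)); vn = e_var (ECons ENil X)
     in e_node2 2 (e_node2 0 (e_node2 2 v0 v1) vn) (e_node2 2 (e_node2 0 (e_node2 3 v0 v1) e_bot)
       (e_node2 2 (e_node1 1 (e_node2 0 v0 e_bot)) (e_node1 1 (e_node2 0 v1 e_bot)))))"

definition code_const :: scom where
  "code_const = SIFE 11 12 (EHd (EHd (EVar 9)))
     (SS (SA 2 (ECons (task 2 (ECons (EHd (ETl (EHd (EVar 9)))) (ECons ENil (ETl (EVar 9)))))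
                (ECons (task 2 (ECons (ETl (ETl (EHd (EVar 9)))) (ECons (lit dT) (ETl (EVar 9)))))
                (ECons (task 4 (lit (tg 2))) (EVar 2)))))
     (SS (SA 4 (ECons (lit (tg 2)) (ECons (e_split_ax (ETl (EVar 9))) (EVar 4))))
         (SA 5 (ECons (ECons ENil (ECons ENil (ETl (EVar 9)))) (ECons (ECons ENil
           (ECons (lit dT) (ETl (EVar 9)))) (EVar 5))))))
     (SIFE 13 14 (ETl (EHd (EVar 9)))
        (SA 3 (ECons (ECons ENil (ECons ENil (ETl (EVar 9)))) (EVar 3)))
        (SA 3 (ECons e_bot (EVar 3))))"

definition code_unop :: scom where
  "code_unop = SA 3 (ECons (ECons (EVar 9) (EHd (EVar 3))) (ETl (EVar 3)))"
definition code_binop :: scom where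
  "code_binop = SA 3 (ECons (ECons (EVar 9) (ECons (EHd (ETl (EVar 3))) (EHd (EVar 3)))) (ETl (ETl (EVar 3))))"
definition code_quant :: scom where
  "code_quant = SA 3 (ECons (ECons (EHd (EVar 9))
    (ECons (ETl (EVar 9)) (EHd (EVar 3)))) (ETl (EVar 3)))"
definition code_guard :: scom where
  "code_guard = SIFE 11 12 (tls 4 (EVar 6))
     (SA 3 (ECons (e_node2 2 (EVar 4) (EHd (EVar 3))) (ETl (EVar 3))))
     (SA 3 (ECons (e_node2 3 (e_node1 1 (EVar 4)) (EHd (EVar 3))) (ETl (EVar 3))))"
definition code_bind :: scom where
  "code_bind = SIFE 11 12 (EVar 5)
     (SS (SA 3 (ECons (ECons (EVar 6) (ECons (EHd (EVar 5)) (EHd (EVar 3)))) (ETl (EVar 3))))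
       (SS (SA 5 (ETl (EVar 5))) (SA 2 (ECons (EVar 7) (EVar 2)))))
     (SA 7 ENil)"

definition body :: scom where
  "body = SS (SA 7 (EHd (EVar 2))) (SS (SA 2 (ETl (EVar 2))) (SS (SA 8 (EHd (EVar 7))) (SS
    (SA 9 (ETl (EVar 7)))
    (SS (SIF 10 (sel 0) code_fm) (SS (SIF 10 (sel 1) code_trm) (SS (SIF 10 (sel 2) code_const) (SS
      (SIF 10 (sel 3) code_unop)
    (SS (SIF 10 (sel 4) code_binop) (SS (SIF 10 (sel 5) code_quant) (SS (SIF 10 (sel 6) code_guard)
      (SIF 10 (sel 7) code_bind)))))))))))"

lemma wf_scom_body: "wf_scom body"
  by (simp add: body_def code_fm_def code_trm_def code_const_def code_unop_def code_binop_def code_quant_def code_guard_def code_bind_def)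

definition body_cost :: nat where "body_cost = 2 + cost body"

lemma body_step: "s 2 \<noteq> DNil \<Longrightarrow> \<exists>t. steps (EVar 2) (compile body) s t (sem body s) \<and> t \<le> body_cost"
proof -
  assume "s 2 \<noteq> DNil"
  moreover have "exec (compile body) s (stime body s) (sem body s)" by (rule exec_compile[OF wf_scom_body])
  ultimately have "steps (EVar 2) (compile body) s (1 + etime (EVar 2) + stime body s) (sem body s)"
    by (intro steps_one) auto
  moreover have "1 + etime (EVar 2) + stime body s \<le> body_cost" using stime_cost[of body s] by (simp add: body_cost_def)
  ultimately show ?thesis by blast
qed

lemma tls_num[simp]: "tls (numeral n) e = ETl (tls (pred_numeral n) e)" by (simp add: numeral_eq_Suc)
lemma tag_num[simp]: "tag (numeral n) = DCons DNil (tag (pred_numeral n))" by (simp add: numeral_eq_Suc)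
lemma tg_num[simp]: "tg (numeral n) = DCons DNil (tg (pred_numeral n))" by (simp add: numeral_eq_Suc)

declare enc_nat.simps[simp del]
lemma enc_nat_0[simp]: "enc_nat 0 = DNil" by (simp add: enc_nat.simps)
lemma enc_nat_even: "n \<ge> 1 \<Longrightarrow> enc_nat (2 * n) = DCons DNil (enc_nat n)"
  by (subst enc_nat.simps) auto
lemma enc_nat_odd: "enc_nat (2 * n + 1) = DCons dT (enc_nat n)"
  by (subst enc_nat.simps) auto
lemma enc_nat_Suc2[simp]: "enc_nat (Suc (2 * n)) = DCons dT (enc_nat n)"
  using enc_nat_odd by simp
lemma enc_nat_1 [simp]: "enc_nat (Suc 0) = DCons dT DNil" using enc_nat_Suc2[of 0] by simp
lemma enc_nat_2xn[simp]: "enc_nat (2 * pos_code rp) = DCons DNil (enc_nat (pos_code rp))"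
  using enc_nat_even[of "pos_code rp"] pos_code_pos[of rp] by simp
lemma enc_pvar: "enc_nat (pvar rp) = DCons DNil (enc_nat (pos_code rp))"
  unfolding pvar_def by simp
lemma enc_pos_code_Nil: "enc_nat (pos_code []) = DCons dT DNil" by simp

lemma eval_e_split_ax: "eval s X = enc_nat (pos_code rp) \<Longrightarrow> eval s (e_split_ax X) = enc_fm (split_ax rp)"
  by (simp add: e_split_ax_def e_var_def e_bot_def e_node2_def e_node1_def split_ax_def enc_pvar Let_def)

text \<open>The loop body pops a task from the stack in variable 2 and dispatches on its tag (variable 8),
  with the payload in variable 9: translate a formula, a term, or a constant at a position; combine
  the topmost results into a node; wrap the translated matrix with the splitting axioms; or bind
  the next new variable. Results are pushed onto the stack in variable 3. Variable 4 accumulates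
  the splitting axioms, variable 5 the list of new variables, and variable 6 holds the tag of the
  leading quantifier; variables 10 to 16 are the flags of the conditionals.\<close>

definition t_fm :: "fm \<Rightarrow> dat" where "t_fm \<phi> = DCons (tag 0) (enc_fm \<phi>)"
definition t_trm :: "trm \<Rightarrow> dat" where "t_trm a = DCons (tag 1) (enc_trm a)"
definition t_const :: "tree \<Rightarrow> dat \<Rightarrow> dat" where "t_const c X = DCons (tag 2) (DCons (enc_tree c) X)"
definition t_unop :: "dat \<Rightarrow> dat" where "t_unop h = DCons (tag 3) h"
definition t_binop :: "dat \<Rightarrow> dat" where "t_binop h = DCons (tag 4) h"
definition t_quant :: "dat \<Rightarrow> dat \<Rightarrow> dat" where "t_quant h v = DCons (tag 5) (DCons h v)"
definition t_guard :: dat where "t_guard = DCons (tag 6) DNil"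
definition t_bind :: dat where "t_bind = DCons (tag 7) DNil"

lemmas tdefs = t_fm_def t_trm_def t_const_def t_unop_def t_binop_def t_quant_def t_guard_def t_bind_def

abbreviation keeps_456 :: "state \<Rightarrow> state \<Rightarrow> bool" where
  "keeps_456 s' s \<equiv> s' 4 = s 4 \<and> s' 5 = s 5 \<and> s' 6 = s 6"

lemma body_FEq: "s 2 = DCons (t_fm (FEq a b)) W0 \<Longrightarrow>
  sem body s 2 = DCons (t_trm a) (DCons (t_trm b) (DCons (t_binop (tg 0)) W0)) \<and> sem body s 3 = s 3 \<and> keeps_456 (sem body s) s"
  by (simp add: body_def sel_def code_fm_def tdefs)

lemma body_FNot: "s 2 = DCons (t_fm (FNot p)) W0 \<Longrightarrow>
  sem body s 2 = DCons (t_fm p) (DCons (t_unop (tg 1)) W0) \<and> sem body s 3 = s 3 \<and> keeps_456 (sem body s) s"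
  by (simp add: body_def sel_def code_fm_def tdefs)

lemma body_FAnd: "s 2 = DCons (t_fm (FAnd p q)) W0 \<Longrightarrow>
  sem body s 2 = DCons (t_fm p) (DCons (t_fm q) (DCons (t_binop (tg 2)) W0)) \<and> sem body s 3 = s 3 \<and> keeps_456 (sem body s) s"
  by (simp add: body_def sel_def code_fm_def tdefs)

lemma body_FOr: "s 2 = DCons (t_fm (FOr p q)) W0 \<Longrightarrow>
  sem body s 2 = DCons (t_fm p) (DCons (t_fm q) (DCons (t_binop (tg 3)) W0)) \<and> sem body s 3 = s 3 \<and> keeps_456 (sem body s) s"
  by (simp add: body_def sel_def code_fm_def tdefs)

lemma body_TVar: "s 2 = DCons (t_trm (TVar x)) W0 \<Longrightarrow>
  sem body s 2 = W0 \<and> sem body s 3 = DCons (enc_trm (TVar (2 * x + 1))) (s 3) \<and> keeps_456 (sem body s) s"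
  by (simp add: body_def sel_def code_trm_def tdefs enc_nat_odd)

lemma body_TConst: "s 2 = DCons (t_trm (TConst c)) W0 \<Longrightarrow>
  sem body s 2 = DCons (t_const c (enc_nat (pos_code []))) W0 \<and> sem body s 3 = s 3 \<and> keeps_456 (sem body s) s"
  by (simp add: body_def sel_def code_trm_def tdefs enc_pos_code_Nil)

lemma body_TJoin: "s 2 = DCons (t_trm (TJoin a b)) W0 \<Longrightarrow>
  sem body s 2 = DCons (t_trm a) (DCons (t_trm b) (DCons (t_binop (tg 2)) W0)) \<and> sem body s 3 = s 3 \<and> keeps_456 (sem body s) s"
  by (simp add: body_def sel_def code_trm_def tdefs)

lemma body_TMeet: "s 2 = DCons (t_trm (TMeet a b)) W0 \<Longrightarrow>
  sem body s 2 = DCons (t_trm a) (DCons (t_trm b) (DCons (t_binop (tg 3)) W0)) \<and> sem body s 3 = s 3 \<and> keeps_456 (sem body s) s"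
  by (simp add: body_def sel_def code_trm_def tdefs)

lemma body_TCompl: "s 2 = DCons (t_trm (TCompl a)) W0 \<Longrightarrow>
  sem body s 2 = DCons (t_trm a) (DCons (t_unop (tg 4)) W0) \<and> sem body s 3 = s 3 \<and> keeps_456 (sem body s) s"
  by (simp add: body_def sel_def code_trm_def tdefs)

lemma body_Leaf: "s 2 = DCons (t_const (Leaf b) (enc_nat (pos_code rp))) W0 \<Longrightarrow>
  sem body s 2 = W0 \<and> sem body s 3 = DCons (enc_trm (tr_const (Leaf b) rp)) (s 3) \<and> keeps_456 (sem body s) s"
  by (cases b) (simp_all add: body_def sel_def code_const_def tdefs enc_pvar e_bot_def)

lemma body_Node: "s 2 = DCons (t_const (Node l r) (enc_nat (pos_code rp))) W0 \<Longrightarrow>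
  sem body s 2 = DCons (t_const l (enc_nat (pos_code (False # rp)))) (DCons (t_const r (enc_nat (pos_code (True # rp)))) (DCons (t_binop (tg 2)) W0))
  \<and> sem body s 3 = s 3 \<and> sem body s 4 = DCons (tg 2) (DCons (enc_fm (split_ax rp)) (s 4))
  \<and> sem body s 5 = DCons (enc_nat (pvar (False # rp))) (DCons (enc_nat (pvar (True # rp))) (s 5)) \<and> sem body s 6 = s 6"
proof -
  assume a: "s 2 = DCons (t_const (Node l r) (enc_nat (pos_code rp))) W0"
  have "enc_nat (pvar (False # rp)) = DCons DNil (DCons DNil (enc_nat (pos_code rp)))"
       "enc_nat (pvar (True # rp)) = DCons DNil (DCons dT (enc_nat (pos_code rp)))"
    by (simp_all add: enc_pvar)
  then show ?thesis using a
    by (simp add: body_def sel_def code_const_def tdefs eval_e_split_ax)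
qed

lemma body_unop: "s 2 = DCons (t_unop h) W0 \<Longrightarrow> s 3 = DCons r R0 \<Longrightarrow>
  sem body s 2 = W0 \<and> sem body s 3 = DCons (DCons h r) R0 \<and> keeps_456 (sem body s) s"
  by (simp add: body_def sel_def code_unop_def tdefs)

lemma body_binop: "s 2 = DCons (t_binop h) W0 \<Longrightarrow> s 3 = DCons r2 (DCons r1 R0) \<Longrightarrow>
  sem body s 2 = W0 \<and> sem body s 3 = DCons (DCons h (DCons r1 r2)) R0 \<and> keeps_456 (sem body s) s"
  by (simp add: body_def sel_def code_binop_def tdefs)

lemma body_quant: "s 2 = DCons (t_quant h v) W0 \<Longrightarrow> s 3 = DCons r R0 \<Longrightarrow>
  sem body s 2 = W0 \<and> sem body s 3 = DCons (DCons h (DCons v r)) R0 \<and> keeps_456 (sem body s) s"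
  by (simp add: body_def sel_def code_quant_def tdefs)

lemma body_guard_ex: "s 2 = DCons t_guard W0 \<Longrightarrow> s 3 = DCons r R0 \<Longrightarrow> s 6 = tg 5 \<Longrightarrow>
  sem body s 2 = W0 \<and> sem body s 3 = DCons (DCons (tg 2) (DCons (s 4) r)) R0 \<and> keeps_456 (sem body s) s"
  by (simp add: body_def sel_def code_guard_def tdefs e_node2_def)

lemma body_guard_all: "s 2 = DCons t_guard W0 \<Longrightarrow> s 3 = DCons r R0 \<Longrightarrow> s 6 = tg 4 \<Longrightarrow>
  sem body s 2 = W0 \<and> sem body s 3 = DCons (DCons (tg 3) (DCons (DCons (tg 1) (s 4)) r)) R0 \<and> keeps_456 (sem body s) s"
  by (simp add: body_def sel_def code_guard_def tdefs e_node2_def e_node1_def)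

lemma body_bind_Cons: "s 2 = DCons t_bind W0 \<Longrightarrow> s 3 = DCons r R0 \<Longrightarrow> s 5 = DCons u U' \<Longrightarrow>
  sem body s 2 = DCons t_bind W0 \<and> sem body s 3 = DCons (DCons (s 6) (DCons u r)) R0 \<and> sem body s 4 = s 4
  \<and> sem body s 5 = U' \<and> sem body s 6 = s 6"
  by (simp add: body_def sel_def code_bind_def tdefs)

lemma body_bind_Nil: "s 2 = DCons t_bind W0 \<Longrightarrow> s 5 = DNil \<Longrightarrow>
  sem body s 2 = W0 \<and> sem body s 3 = s 3 \<and> keeps_456 (sem body s) s"
  by (simp add: body_def sel_def code_bind_def tdefs)

definition runs :: "dat \<Rightarrow> dat \<Rightarrow> (dat \<Rightarrow> dat) \<Rightarrow> (dat \<Rightarrow> dat) \<Rightarrow> nat \<Rightarrow> bool" where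
  "runs tsk res fC fU n = (\<forall>s W0. s 2 = DCons tsk W0 \<longrightarrow> (\<exists>t s'. steps (EVar 2) (compile body) s t s' \<and>
     s' 2 = W0 \<and> s' 3 = DCons res (s 3) \<and> s' 4 = fC (s 4) \<and> s' 5 = fU (s 5) \<and> s' 6 = s 6 \<and> t \<le> n))"

lemma runs_mono: "runs tsk res fC fU n \<Longrightarrow> n \<le> m \<Longrightarrow> runs tsk res fC fU m"
  unfolding runs_def by (meson le_trans)

lemma runs_leaf:
  assumes "\<And>s W0. s 2 = DCons tsk W0 \<Longrightarrow> sem body s 2 = W0 \<and> sem body s 3 = DCons r (s 3) \<and> keeps_456 (sem body s) s"
  shows "runs tsk r id id body_cost"
  unfolding runs_def
proof (intro allI impI)
  fix s :: state and W0 assume s: "s 2 = DCons tsk W0"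
  obtain t where "steps (EVar 2) (compile body) s t (sem body s)" "t \<le> body_cost" using body_step[of s] s by auto
  then show "\<exists>t s'. steps (EVar 2) (compile body) s t s' \<and> s' 2 = W0 \<and> s' 3 = DCons r (s 3) \<and>
     s' 4 = id (s 4) \<and> s' 5 = id (s 5) \<and> s' 6 = s 6 \<and> t \<le> body_cost" using assms[of s W0, OF s] by auto
qed

lemma runs_chain:
  assumes "\<And>s W0. s 2 = DCons tsk W0 \<Longrightarrow> sem body s 2 = DCons X W0 \<and> sem body s 3 = s 3 \<and> keeps_456 (sem body s) s"
    and "runs X r fC fU n"
  shows "runs tsk r fC fU (body_cost + n)"
  unfolding runs_def
proof (intro allI impI)
  fix s :: state and W0 assume s: "s 2 = DCons tsk W0"
  obtain t1 where t1: "steps (EVar 2) (compile body) s t1 (sem body s)" "t1 \<le> body_cost" using body_step[of s] s by auto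
  note a = assms(1)[of s W0, OF s]
  obtain t2 s2 where r: "steps (EVar 2) (compile body) (sem body s) t2 s2" "s2 2 = W0" "s2 3 = DCons r (sem body s 3)"
    "s2 4 = fC (sem body s 4)" "s2 5 = fU (sem body s 5)" "s2 6 = sem body s 6" "t2 \<le> n"
    using assms(2) a unfolding runs_def by blast
  show "\<exists>t s'. steps (EVar 2) (compile body) s t s' \<and> s' 2 = W0 \<and> s' 3 = DCons r (s 3) \<and>
     s' 4 = fC (s 4) \<and> s' 5 = fU (s 5) \<and> s' 6 = s 6 \<and> t \<le> body_cost + n"
    using steps_trans[OF t1(1) r(1)] r a t1 by (intro exI[of _ "t1 + t2"] exI[of _ s2]) auto
qed

lemma runs_unop:
  assumes "\<And>s W0. s 2 = DCons tsk W0 \<Longrightarrow> sem body s 2 = DCons X (DCons (t_unop h) W0) \<and> sem body s 3 = s 3 \<and> keeps_456 (sem body s) s"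
    and "runs X r fC fU n"
  shows "runs tsk (DCons h r) fC fU (2 * body_cost + n)"
  unfolding runs_def
proof (intro allI impI)
  fix s :: state and W0 assume s: "s 2 = DCons tsk W0"
  obtain t1 where t1: "steps (EVar 2) (compile body) s t1 (sem body s)" "t1 \<le> body_cost" using body_step[of s] s by auto
  note a = assms(1)[of s W0, OF s]
  obtain t2 s2 where r: "steps (EVar 2) (compile body) (sem body s) t2 s2" "s2 2 = DCons (t_unop h) W0" "s2 3 = DCons r (sem body s 3)"
    "s2 4 = fC (sem body s 4)" "s2 5 = fU (sem body s 5)" "s2 6 = sem body s 6" "t2 \<le> n"
    using assms(2) a unfolding runs_def by blast
  obtain t3 where t3: "steps (EVar 2) (compile body) s2 t3 (sem body s2)" "t3 \<le> body_cost" using body_step[of s2] r by auto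
  have m: "sem body s2 2 = W0 \<and> sem body s2 3 = DCons (DCons h r) (s 3) \<and> keeps_456 (sem body s2) s2"
    using body_unop[of s2 h W0 r "s 3"] r a by auto
  show "\<exists>t s'. steps (EVar 2) (compile body) s t s' \<and> s' 2 = W0 \<and> s' 3 = DCons (DCons h r) (s 3) \<and>
     s' 4 = fC (s 4) \<and> s' 5 = fU (s 5) \<and> s' 6 = s 6 \<and> t \<le> 2 * body_cost + n"
    using steps_trans[OF steps_trans[OF t1(1) r(1)] t3(1)] r a t1 t3 m
    by (intro exI[of _ "t1 + t2 + t3"] exI[of _ "sem body s2"]) auto
qed

lemma runs_binop:
  assumes "\<And>s W0. s 2 = DCons tsk W0 \<Longrightarrow> sem body s 2 = DCons X (DCons Y (DCons (t_binop h) W0)) \<and> sem body s 3 = s 3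
      \<and> sem body s 4 = gC (s 4) \<and> sem body s 5 = gU (s 5) \<and> sem body s 6 = s 6"
    and "runs X rx fx ux nx" and "runs Y ry fy uy ny"
  shows "runs tsk (DCons h (DCons rx ry)) (\<lambda>d. fy (fx (gC d))) (\<lambda>d. uy (ux (gU d))) (2 * body_cost + nx + ny)"
  unfolding runs_def
proof (intro allI impI)
  fix s :: state and W0 assume s: "s 2 = DCons tsk W0"
  obtain t1 where t1: "steps (EVar 2) (compile body) s t1 (sem body s)" "t1 \<le> body_cost" using body_step[of s] s by auto
  note a = assms(1)[of s W0, OF s]
  obtain t2 s2 where r: "steps (EVar 2) (compile body) (sem body s) t2 s2" "s2 2 = DCons Y (DCons (t_binop h) W0)" "s2 3 = DCons rx (sem body s 3)"
    "s2 4 = fx (sem body s 4)" "s2 5 = ux (sem body s 5)" "s2 6 = sem body s 6" "t2 \<le> nx"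
    using assms(2) a unfolding runs_def by blast
  obtain t3 s3 where q: "steps (EVar 2) (compile body) s2 t3 s3" "s3 2 = DCons (t_binop h) W0" "s3 3 = DCons ry (s2 3)"
    "s3 4 = fy (s2 4)" "s3 5 = uy (s2 5)" "s3 6 = s2 6" "t3 \<le> ny"
    using assms(3) r unfolding runs_def by blast
  obtain t4 where t4: "steps (EVar 2) (compile body) s3 t4 (sem body s3)" "t4 \<le> body_cost" using body_step[of s3] q by auto
  have m: "sem body s3 2 = W0 \<and> sem body s3 3 = DCons (DCons h (DCons rx ry)) (s 3) \<and> keeps_456 (sem body s3) s3"
    using body_binop[of s3 h W0 ry rx "s 3"] q r a by auto
  show "\<exists>t s'. steps (EVar 2) (compile body) s t s' \<and> s' 2 = W0 \<and> s' 3 = DCons (DCons h (DCons rx ry)) (s 3) \<and>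
     s' 4 = fy (fx (gC (s 4))) \<and> s' 5 = uy (ux (gU (s 5))) \<and> s' 6 = s 6 \<and> t \<le> 2 * body_cost + nx + ny"
    using steps_trans[OF steps_trans[OF steps_trans[OF t1(1) r(1)] q(1)] t4(1)] r q a t1 t4 m
    by (intro exI[of _ "t1 + t2 + t3 + t4"] exI[of _ "sem body s3"]) auto
qed

fun const_axs_d :: "tree \<Rightarrow> bool list \<Rightarrow> dat \<Rightarrow> dat" where
  "const_axs_d (Leaf b) rp d = d"
| "const_axs_d (Node l r) rp d =
     const_axs_d r (True # rp) (const_axs_d l (False # rp) (DCons (tg 2) (DCons (enc_fm (split_ax rp)) d)))"

fun const_vars_d :: "tree \<Rightarrow> bool list \<Rightarrow> dat \<Rightarrow> dat" where
  "const_vars_d (Leaf b) rp d = d"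
| "const_vars_d (Node l r) rp d =
     const_vars_d r (True # rp) (const_vars_d l (False # rp)
       (DCons (enc_nat (pvar (False # rp))) (DCons (enc_nat (pvar (True # rp))) d)))"

lemma runs_eq: "runs t r f u n \<Longrightarrow> r = r' \<Longrightarrow> f = f' \<Longrightarrow> u = u' \<Longrightarrow> n \<le> n' \<Longrightarrow> runs t r' f' u' n'"
  using runs_mono by blast

lemma runs_const:
  "runs (t_const c (enc_nat (pos_code rp))) (enc_trm (tr_const c rp)) (const_axs_d c rp) (const_vars_d c rp)
     (2 * body_cost * dsize (enc_tree c))"
proof (induction c arbitrary: rp)
  case (Leaf b)
  have "runs (t_const (Leaf b) (enc_nat (pos_code rp))) (enc_trm (tr_const (Leaf b) rp)) id id body_cost"
    by (rule runs_leaf) (rule body_Leaf)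
  then show ?case by (rule runs_eq) (auto simp: fun_eq_iff)
next
  case (Node l r)
  from runs_binop[OF _ Node.IH] show ?case
    by (rule runs_eq) (auto simp: body_Node fun_eq_iff algebra_simps)
qed

lemma runs_trm:
  "runs (t_trm a) (enc_trm (tr_trm a))
     (fold (\<lambda>c. const_axs_d c []) (tconst_list a)) (fold (\<lambda>c. const_vars_d c []) (tconst_list a))
     (2 * body_cost * dsize (enc_trm a))"
proof (induction a)
  case (TVar x)
  have "runs (t_trm (TVar x)) (enc_trm (TVar (2 * x + 1))) id id body_cost"
    by (rule runs_leaf) (rule body_TVar)
  then show ?case by (rule runs_eq) (auto simp: fun_eq_iff)
next
  case (TConst c)
  have "runs (t_trm (TConst c)) (enc_trm (tr_const c [])) (const_axs_d c []) (const_vars_d c [])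
      (body_cost + 2 * body_cost * dsize (enc_tree c))"
    by (rule runs_chain[OF _ runs_const]) (rule body_TConst)
  then show ?case by (rule runs_eq) (auto simp: fun_eq_iff algebra_simps)
next
  case (TJoin a b)
  from runs_binop[OF _ TJoin.IH] show ?case
    by (rule runs_eq) (auto simp: body_TJoin fun_eq_iff algebra_simps)
next
  case (TMeet a b)
  from runs_binop[OF _ TMeet.IH] show ?case
    by (rule runs_eq) (auto simp: body_TMeet fun_eq_iff algebra_simps)
next
  case (TCompl a)
  from runs_unop[OF _ TCompl.IH] show ?case
    by (rule runs_eq) (auto simp: body_TCompl algebra_simps)
qed

lemma runs_fm:
  "qfree \<phi> \<Longrightarrow> runs (t_fm \<phi>) (enc_fm (tr_fm \<phi>))
     (fold (\<lambda>c. const_axs_d c []) (fconst_list \<phi>)) (fold (\<lambda>c. const_vars_d c []) (fconst_list \<phi>))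
     (2 * body_cost * dsize (enc_fm \<phi>))"
proof (induction \<phi>)
  case (FEq a b)
  from runs_binop[OF _ runs_trm runs_trm] show ?case
    by (rule runs_eq) (auto simp: body_FEq fun_eq_iff algebra_simps)
next
  case (FNot p)
  then have "qfree p" by simp
  from runs_unop[OF _ FNot.IH[OF this]] show ?case
    by (rule runs_eq) (auto simp: body_FNot algebra_simps)
next
  case (FAnd p q)
  then have "qfree p" "qfree q" by simp_all
  from runs_binop[OF _ FAnd.IH(1)[OF this(1)] FAnd.IH(2)[OF this(2)]] show ?case
    by (rule runs_eq) (auto simp: body_FAnd fun_eq_iff algebra_simps)
next
  case (FOr p q)
  then have "qfree p" "qfree q" by simp_all
  from runs_binop[OF _ FOr.IH(1)[OF this(1)] FOr.IH(2)[OF this(2)]] show ?case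
    by (rule runs_eq) (auto simp: body_FOr fun_eq_iff algebra_simps)
qed auto

fun enc_vars :: "nat list \<Rightarrow> dat" where
  "enc_vars [] = DNil"
| "enc_vars (u # us) = DCons (enc_nat u) (enc_vars us)"

lemma const_axs_d_enc: "const_axs_d c rp (enc_fm C) = enc_fm (const_axs c rp C)"
proof (induction c arbitrary: rp C)
  case (Leaf x) then show ?case by simp
next
  case (Node l r)
  have "const_axs_d (Node l r) rp (enc_fm C) = const_axs_d r (True # rp) (const_axs_d l (False # rp) (enc_fm (FAnd (split_ax rp) C)))" by simp
  also have "\<dots> = enc_fm (const_axs (Node l r) rp C)" by (simp only: Node.IH const_axs.simps)
  finally show ?case .
qed
lemma const_vars_d_enc: "const_vars_d c rp (enc_vars U) = enc_vars (const_vars c rp U)"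
proof (induction c arbitrary: rp U)
  case (Leaf x) then show ?case by simp
next
  case (Node l r)
  have "const_vars_d (Node l r) rp (enc_vars U) = const_vars_d r (True # rp) (const_vars_d l (False # rp) (enc_vars (pvar (False # rp) # pvar (True # rp) # U)))" by simp
  also have "\<dots> = enc_vars (const_vars (Node l r) rp U)" by (simp only: Node.IH const_vars.simps)
  finally show ?case .
qed
lemma fold_const_axs_d_enc:
  "fold (\<lambda>c. const_axs_d c []) cs (enc_fm C) = enc_fm (fold (\<lambda>c. const_axs c []) cs C)"
  by (induction cs arbitrary: C) (auto simp: const_axs_d_enc)

lemma fold_const_vars_d_enc:
  "fold (\<lambda>c. const_vars_d c []) cs (enc_vars U) = enc_vars (fold (\<lambda>c. const_vars c []) cs U)"
  by (induction cs arbitrary: U) (auto simp: const_vars_d_enc)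

definition strip_code :: scom where
  "strip_code = SS (SA 2 (ECons (task 5 (ECons (EHd (EVar 0))
    (ECons (lit dT) (EHd (ETl (EVar 0)))))) (EVar 2)))
            (SA 0 (ETl (ETl (EVar 0))))"
definition strip_guard :: exp where "strip_guard = tls 3 (EHd (EVar 0))"

definition init_code :: scom where
  "init_code = SS (SA 6 (lit (tg 5))) (SS (SIF 10 (tls 3 (EHd (EVar 0))) (SA 6 (EHd (EVar 0))))
     (SS (SA 4 (lit (enc_fm root_ax))) (SS (SA 5 (lit (enc_vars [pvar []]))) (SS
       (SA 2 (lit (DCons t_bind DNil))) (SA 3 ENil)))))"
definition start_code :: scom where
  "start_code = SA 2 (ECons (task 0 (EVar 0)) (ECons (lit t_guard) (EVar 2)))"
definition output_code :: scom where "output_code = SA 1 (EHd (EVar 3))"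

definition translator :: com where
  "translator = Seq (compile init_code) (Seq (While strip_guard (compile strip_code)) (Seq (compile start_code) (Seq (While (EVar 2) (compile body)) (compile output_code))))"

definition quant_tag :: "bool \<Rightarrow> dat" where "quant_tag q = (if q then tg 4 else tg 5)"

fun prefix_tasks :: "fm \<Rightarrow> dat \<Rightarrow> dat" where
  "prefix_tasks (FAll x p) W = prefix_tasks p (DCons (t_quant (tg 4) (enc_nat (2 * x + 1))) W)"
| "prefix_tasks (FEx x p) W = prefix_tasks p (DCons (t_quant (tg 5) (enc_nat (2 * x + 1))) W)"
| "prefix_tasks p W = W"

fun prefix_len :: "fm \<Rightarrow> nat" where
  "prefix_len (FAll x p) = Suc (prefix_len p)"
| "prefix_len (FEx x p) = Suc (prefix_len p)"
| "prefix_len p = 0"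

lemma prenex_quant_induct [consumes 1, case_names qfree quant]:
  assumes "prenex \<phi>" "\<And>p. qfree p \<Longrightarrow> P p" "\<And>q x p. prenex p \<Longrightarrow> P p \<Longrightarrow> P (quant q x p)"
  shows "P \<phi>"
  using assms(1)
proof induction
  case (2 p x)
  then show ?case using assms(3)[of p True x] by (simp add: quant_def)
next
  case (3 p x)
  then show ?case using assms(3)[of p False x] by (simp add: quant_def)
qed (rule assms(2))

lemma prefix_tasks_quant [simp]:
  "prefix_tasks (quant q x p) W = prefix_tasks p (DCons (t_quant (quant_tag q) (enc_nat (2 * x + 1))) W)"
  and prefix_len_quant [simp]: "prefix_len (quant q x p) = Suc (prefix_len p)"
  and reprefix_quant [simp]: "reprefix M (quant q x p) = quant q (2 * x + 1) (reprefix M p)"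
  and matrix_quant [simp]: "matrix (quant q x p) = matrix p"
  and enc_fm_quant: "enc_fm (quant q u \<phi>) = DCons (quant_tag q) (DCons (enc_nat u) (enc_fm \<phi>))"
  by (cases q; simp add: quant_def quant_tag_def)+

definition strip_cost :: nat where "strip_cost = 1 + etime strip_guard + cost strip_code"

lemma qfree_guard: "qfree \<psi> \<Longrightarrow> s 0 = enc_fm \<psi> \<Longrightarrow> eval s strip_guard = DNil"
  by (cases \<psi>) (auto simp: strip_guard_def)

lemma strip_steps:
  "prenex \<phi> \<Longrightarrow> s 0 = enc_fm \<phi> \<Longrightarrow> \<exists>t s'. steps strip_guard (compile strip_code) s t s' \<and>
    s' 0 = enc_fm (matrix \<phi>) \<and> s' 2 = prefix_tasks \<phi> (s 2) \<and> s' 3 = s 3 \<and> s' 4 = s 4 \<and> s' 5 = s 5 \<and>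
    s' 6 = s 6 \<and> t \<le> strip_cost * prefix_len \<phi>"
proof (induction \<phi> arbitrary: s rule: prenex_quant_induct)
  case (qfree p)
  then show ?case by (intro exI[of _ 0] exI[of _ s]) (cases p; auto intro: steps_refl)
next
  case (quant q x p)
  let ?s = "sem strip_code s"
  have "eval s strip_guard \<noteq> DNil"
    using quant.prems by (simp add: strip_guard_def enc_fm_quant quant_tag_def)
  then have st: "steps strip_guard (compile strip_code) s (1 + etime strip_guard + stime strip_code s) ?s"
    by (rule steps_one) (rule exec_compile, simp add: strip_code_def)
  have sp: "?s 0 = enc_fm p" "?s 2 = DCons (t_quant (quant_tag q) (enc_nat (2 * x + 1))) (s 2)"
    "?s 3 = s 3" "?s 4 = s 4" "?s 5 = s 5" "?s 6 = s 6"
    using quant.prems by (simp_all add: strip_code_def tdefs enc_nat_odd enc_fm_quant)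
  obtain t s' where r: "steps strip_guard (compile strip_code) ?s t s'" "s' 0 = enc_fm (matrix p)"
    "s' 2 = prefix_tasks p (?s 2)" "s' 3 = ?s 3" "s' 4 = ?s 4" "s' 5 = ?s 5" "s' 6 = ?s 6"
    "t \<le> strip_cost * prefix_len p"
    using quant.IH[of ?s] sp by blast
  have "1 + etime strip_guard + stime strip_code s \<le> strip_cost"
    using stime_cost[of strip_code s] by (simp add: strip_cost_def)
  then show ?case using steps_trans[OF st r(1)] r sp
    by (intro exI[of _ "1 + etime strip_guard + stime strip_code s + t"] exI[of _ s']) auto
qed

lemma runs_quants:
  "prenex \<phi> \<Longrightarrow> s 2 = prefix_tasks \<phi> W0 \<Longrightarrow> s 3 = DCons (enc_fm M) R0 \<Longrightarrow>
    \<exists>t s'. steps (EVar 2) (compile body) s t s' \<and> s' 2 = W0 \<and> s' 3 = DCons (enc_fm (reprefix M \<phi>)) R0 \<and>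
      s' 4 = s 4 \<and> s' 5 = s 5 \<and> s' 6 = s 6 \<and> t \<le> body_cost * prefix_len \<phi>"
proof (induction \<phi> arbitrary: W0 rule: prenex_quant_induct)
  case (qfree p)
  then show ?case by (intro exI[of _ 0] exI[of _ s]) (cases p; auto intro: steps_refl)
next
  case (quant q x p)
  obtain t s' where r: "steps (EVar 2) (compile body) s t s'"
    "s' 2 = DCons (t_quant (quant_tag q) (enc_nat (2 * x + 1))) W0"
    "s' 3 = DCons (enc_fm (reprefix M p)) R0" "s' 4 = s 4" "s' 5 = s 5" "s' 6 = s 6"
    "t \<le> body_cost * prefix_len p"
    using quant by fastforce
  obtain t2 where t2: "steps (EVar 2) (compile body) s' t2 (sem body s')" "t2 \<le> body_cost"
    using body_step[of s'] r by auto
  have "sem body s' 2 = W0" "sem body s' 3 = DCons (enc_fm (reprefix M (quant q x p))) R0"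
    "keeps_456 (sem body s') s'"
    using body_quant[OF r(2) r(3)] by (simp_all add: enc_fm_quant)
  then show ?case using steps_trans[OF r(1) t2(1)] r t2
    by (intro exI[of _ "t + t2"] exI[of _ "sem body s'"]) auto
qed

lemma runs_bind: "s 2 = DCons t_bind W0 \<Longrightarrow> s 5 = enc_vars Us \<Longrightarrow> s 3 = DCons (enc_fm \<phi>) R0 \<Longrightarrow> s 6 = quant_tag q \<Longrightarrow>
  \<exists>t s'. steps (EVar 2) (compile body) s t s' \<and> s' 2 = W0 \<and> s' 3 = DCons (enc_fm (fold (quant q) Us \<phi>)) R0 \<and>
    t \<le> body_cost * (length Us + 1)"
proof (induction Us arbitrary: s \<phi>)
  case Nil
  obtain t where t: "steps (EVar 2) (compile body) s t (sem body s)" "t \<le> body_cost" using body_step[of s] Nil by auto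
  have "sem body s 2 = W0 \<and> sem body s 3 = s 3 \<and> keeps_456 (sem body s) s" by (rule body_bind_Nil) (use Nil in auto)
  then show ?case using t Nil by (intro exI[of _ t] exI[of _ "sem body s"]) auto
next
  case (Cons u Us)
  obtain t where t: "steps (EVar 2) (compile body) s t (sem body s)" "t \<le> body_cost" using body_step[of s] Cons by auto
  have b: "sem body s 2 = DCons t_bind W0 \<and> sem body s 3 = DCons (DCons (s 6) (DCons (enc_nat u) (enc_fm \<phi>))) R0 \<and> sem body s 4 = s 4
    \<and> sem body s 5 = enc_vars Us \<and> sem body s 6 = s 6" by (rule body_bind_Cons) (use Cons.prems in auto)
  have e: "DCons (s 6) (DCons (enc_nat u) (enc_fm \<phi>)) = enc_fm (quant q u \<phi>)"
    using Cons.prems by (simp add: enc_fm_quant)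
  obtain t2 s2 where r: "steps (EVar 2) (compile body) (sem body s) t2 s2" "s2 2 = W0"
    "s2 3 = DCons (enc_fm (fold (quant q) Us (quant q u \<phi>))) R0" "t2 \<le> body_cost * (length Us + 1)"
    using Cons.IH[of "sem body s" "quant q u \<phi>"] b e Cons.prems by auto
  show ?case using steps_trans[OF t(1) r(1)] t r by (intro exI[of _ "t + t2"] exI[of _ s2]) auto
qed

lemma init_sem: "prenex \<Phi> \<Longrightarrow> s 0 = enc_fm \<Phi> \<Longrightarrow>
  sem init_code s 0 = enc_fm \<Phi> \<and> sem init_code s 2 = DCons t_bind DNil \<and> sem init_code s 3 = DNil \<and> sem init_code s 4 = enc_fm root_ax \<and>
  sem init_code s 5 = enc_vars [pvar []] \<and> sem init_code s 6 = quant_tag (starts_forall \<Phi>)"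
  by (cases \<Phi>) (auto simp: init_code_def quant_tag_def elim: prenex.cases)

definition loop_bound :: "fm \<Rightarrow> nat" where
  "loop_bound \<Phi> = body_cost + 2 * body_cost * dsize (enc_fm (matrix \<Phi>)) + body_cost * prefix_len \<Phi>
     + body_cost * (length (fm_vars \<Phi> [pvar []]) + 1)"

definition time_bound :: "fm \<Rightarrow> nat" where
  "time_bound \<Phi> = cost init_code + strip_cost * prefix_len \<Phi> + 1 + etime strip_guard + cost start_code
     + loop_bound \<Phi> + 2 + cost output_code"

lemma body_guard: "s 2 = DCons t_guard W0 \<Longrightarrow> s 3 = DCons (enc_fm \<psi>) R0 \<Longrightarrow> s 6 = quant_tag q \<Longrightarrow> s 4 = enc_fm C \<Longrightarrow>
  sem body s 2 = W0 \<and> sem body s 3 = DCons (enc_fm (guarded q C \<psi>)) R0 \<and> keeps_456 (sem body s) s"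
proof (cases q)
  case True
  assume a: "s 2 = DCons t_guard W0" "s 3 = DCons (enc_fm \<psi>) R0" "s 6 = quant_tag q" "s 4 = enc_fm C"
  then show ?thesis using body_guard_all[of s W0 "enc_fm \<psi>" R0] True by (simp add: quant_tag_def guarded_def)
next
  case False
  assume a: "s 2 = DCons t_guard W0" "s 3 = DCons (enc_fm \<psi>) R0" "s 6 = quant_tag q" "s 4 = enc_fm C"
  then show ?thesis using body_guard_ex[of s W0 "enc_fm \<psi>" R0] False by (simp add: quant_tag_def guarded_def)
qed

lemma body_loop_translate:
  assumes pr: "prenex \<Phi>"
    and s: "s 2 = DCons (t_fm (matrix \<Phi>)) (DCons t_guard (prefix_tasks \<Phi> (DCons t_bind DNil)))"
      "s 3 = DNil" "s 4 = enc_fm root_ax" "s 5 = enc_vars [pvar []]" "s 6 = quant_tag (starts_forall \<Phi>)"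
  shows "\<exists>t s'. steps (EVar 2) (compile body) s t s' \<and> s' 2 = DNil \<and>
    s' 3 = DCons (enc_fm (translate \<Phi>)) DNil \<and> t \<le> loop_bound \<Phi>"
proof -
  let ?\<psi> = "matrix \<Phi>"
  let ?q = "starts_forall \<Phi>"
  obtain t1 s1 where F: "steps (EVar 2) (compile body) s t1 s1"
    "s1 2 = DCons t_guard (prefix_tasks \<Phi> (DCons t_bind DNil))" "s1 3 = DCons (enc_fm (tr_fm ?\<psi>)) (s 3)"
    "s1 4 = fold (\<lambda>c. const_axs_d c []) (fconst_list ?\<psi>) (s 4)"
    "s1 5 = fold (\<lambda>c. const_vars_d c []) (fconst_list ?\<psi>) (s 5)" "s1 6 = s 6"
    "t1 \<le> 2 * body_cost * dsize (enc_fm ?\<psi>)"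
    using runs_fm[OF qfree_matrix[OF pr]] s(1) unfolding runs_def by blast
  have s1: "s1 4 = enc_fm (fm_axs \<Phi> root_ax)" "s1 5 = enc_vars (fm_vars \<Phi> [pvar []])"
    using F(4,5) s(3,4) fold_const_axs_d_enc fold_const_vars_d_enc[of _ "[pvar []]"]
    by (simp_all add: fm_axs_def fm_vars_def)
  obtain t2 where t2: "steps (EVar 2) (compile body) s1 t2 (sem body s1)" "t2 \<le> body_cost"
    using body_step[of s1] F(2) by auto
  define M where "M = guarded ?q (fm_axs \<Phi> root_ax) (tr_fm ?\<psi>)"
  have s2: "sem body s1 2 = prefix_tasks \<Phi> (DCons t_bind DNil)"
    "sem body s1 3 = DCons (enc_fm M) DNil" "keeps_456 (sem body s1) s1"
    unfolding M_def using body_guard[OF F(2) _ _ s1(1)] F(3,6) s(2,5) by auto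
  obtain t3 s3 where Q: "steps (EVar 2) (compile body) (sem body s1) t3 s3" "s3 2 = DCons t_bind DNil"
    "s3 3 = DCons (enc_fm (reprefix M \<Phi>)) DNil" "s3 5 = sem body s1 5" "s3 6 = sem body s1 6"
    "t3 \<le> body_cost * prefix_len \<Phi>"
    using runs_quants[OF pr, of "sem body s1" "DCons t_bind DNil" M DNil] s2 by blast
  obtain t4 s4 where U: "steps (EVar 2) (compile body) s3 t4 s4" "s4 2 = DNil"
    "s4 3 = DCons (enc_fm (fold (quant ?q) (fm_vars \<Phi> [pvar []]) (reprefix M \<Phi>))) DNil"
    "t4 \<le> body_cost * (length (fm_vars \<Phi> [pvar []]) + 1)"
    using runs_bind[of s3 DNil "fm_vars \<Phi> [pvar []]" "reprefix M \<Phi>" DNil ?q] Q s2 s1 F(6) s(5) by auto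
  have "steps (EVar 2) (compile body) s (t1 + (t2 + (t3 + t4))) s4"
    using steps_trans[OF F(1) steps_trans[OF t2(1) steps_trans[OF Q(1) U(1)]]] .
  moreover have "t1 + (t2 + (t3 + t4)) \<le> loop_bound \<Phi>"
    using F(7) t2(2) Q(6) U(4) by (simp add: loop_bound_def)
  ultimately show ?thesis using U(2,3) by (auto simp: translate_def M_def)
qed

theorem run_translator:
  assumes pr: "prenex \<Phi>"
  shows "\<exists>t. run translator (enc_fm \<Phi>) t (enc_fm (translate \<Phi>)) \<and> t \<le> time_bound \<Phi>"
proof -
  define s0 :: state where "s0 = (\<lambda>v. if v = 0 then enc_fm \<Phi> else DNil)"
  define s1 where "s1 = sem init_code s0"
  have i1: "exec (compile init_code) s0 (stime init_code s0) s1"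
    unfolding s1_def by (rule exec_compile) (simp add: init_code_def)
  have s1: "s1 0 = enc_fm \<Phi>" "s1 2 = DCons t_bind DNil" "s1 3 = DNil" "s1 4 = enc_fm root_ax"
     "s1 5 = enc_vars [pvar []]" "s1 6 = quant_tag (starts_forall \<Phi>)"
    using init_sem[OF pr, of s0] by (auto simp: s1_def s0_def)
  obtain ta s2 where A: "steps strip_guard (compile strip_code) s1 ta s2" "s2 0 = enc_fm (matrix \<Phi>)"
    "s2 2 = prefix_tasks \<Phi> (s1 2)" "s2 3 = s1 3" "s2 4 = s1 4" "s2 5 = s1 5" "s2 6 = s1 6"
    "ta \<le> strip_cost * prefix_len \<Phi>"
    using strip_steps[of \<Phi> s1, OF pr s1(1)] by blast
  have ea: "exec (While strip_guard (compile strip_code)) s1 (ta + 1 + etime strip_guard) s2"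
    by (rule steps_while[OF A(1)]) (rule qfree_guard[of "matrix \<Phi>" s2, OF qfree_matrix[OF pr] A(2)])
  define s3 where "s3 = sem start_code s2"
  have em: "exec (compile start_code) s2 (stime start_code s2) s3"
    unfolding s3_def by (rule exec_compile) (simp add: start_code_def)
  have "s3 2 = DCons (t_fm (matrix \<Phi>)) (DCons t_guard (prefix_tasks \<Phi> (DCons t_bind DNil)))"
    "s3 3 = DNil" "s3 4 = enc_fm root_ax" "s3 5 = enc_vars [pvar []]" "s3 6 = quant_tag (starts_forall \<Phi>)"
    using A s1 by (simp_all add: s3_def start_code_def tdefs)
  then obtain tb s4 where B: "steps (EVar 2) (compile body) s3 tb s4" "s4 2 = DNil"
    "s4 3 = DCons (enc_fm (translate \<Phi>)) DNil" "tb \<le> loop_bound \<Phi>"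
    using body_loop_translate[OF pr] by blast
  have eb: "exec (While (EVar 2) (compile body)) s3 (tb + 1 + etime (EVar 2)) s4"
    by (rule steps_while[OF B(1)]) (simp add: B(2))
  define s5 where "s5 = sem output_code s4"
  have ef: "exec (compile output_code) s4 (stime output_code s4) s5"
    unfolding s5_def by (rule exec_compile) (simp add: output_code_def)
  define t where "t = stime init_code s0 + ((ta + 1 + etime strip_guard)
    + (stime start_code s2 + ((tb + 1 + etime (EVar 2)) + stime output_code s4)))"
  have "exec translator s0 t s5"
    unfolding translator_def t_def
    by (intro exec.intros(2)[OF i1] exec.intros(2)[OF ea] exec.intros(2)[OF em] exec.intros(2)[OF eb ef])
  then have "run translator (enc_fm \<Phi>) t (enc_fm (translate \<Phi>))"
    unfolding run_def using B(3) by (auto simp: s0_def s5_def output_code_def)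
  moreover have "t \<le> time_bound \<Phi>"
    using stime_cost[of init_code s0] stime_cost[of start_code s2] stime_cost[of output_code s4] A(8) B(4)
    unfolding time_bound_def t_def by simp
  ultimately show ?thesis by blast
qed

section \<open>Size of the output\<close>

lemma dsize_tg[simp]: "dsize (tg k) = 2 * k + 1" by (induction k) auto

lemma dsize_pos_code: "dsize (enc_nat (pos_code rp)) \<le> 5 + 4 * length rp"
proof (induction rp)
  case Nil then show ?case by simp
next
  case (Cons b rp)
  then show ?case by (cases b) auto
qed

lemma dsize_pvar: "dsize (enc_nat (pvar rp)) \<le> 7 + 4 * length rp"
  using dsize_pos_code[of rp] by (simp add: enc_pvar)

lemma dsize_tr_const: "dsize (enc_trm (tr_const c rp)) \<le> dsize (enc_tree c) * (9 + 4 * (length rp + dsize (enc_tree c)))"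
proof (induction c arbitrary: rp)
  case (Leaf b)
  show ?case
  proof (cases b)
    case True
    then show ?thesis using dsize_pvar[of rp] by simp
  next
    case False
    then show ?thesis by simp
  qed
next
  case (Node l r)
  define dl where "dl = dsize (enc_tree l)"
  define dr where "dr = dsize (enc_tree r)"
  define dN where "dN = dsize (enc_tree (Node l r))"
  have dN: "dN = 5 + dl + dr" by (simp add: dN_def dl_def dr_def)
  define K where "K = 9 + 4 * (length rp + dN)"
  have A: "dsize (enc_trm (tr_const l (False # rp))) \<le> dl * K"
  proof -
    have "dsize (enc_trm (tr_const l (False # rp))) \<le> dl * (9 + 4 * (length (False # rp) + dl))"
      using Node.IH(1)[of "False # rp"] by (simp add: dl_def)
    also have "\<dots> \<le> dl * K" unfolding K_def using dN by (intro mult_le_mono2) simp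
    finally show ?thesis .
  qed
  have B: "dsize (enc_trm (tr_const r (True # rp))) \<le> dr * K"
  proof -
    have "dsize (enc_trm (tr_const r (True # rp))) \<le> dr * (9 + 4 * (length (True # rp) + dr))"
      using Node.IH(2)[of "True # rp"] by (simp add: dr_def)
    also have "\<dots> \<le> dr * K" unfolding K_def using dN by (intro mult_le_mono2) simp
    finally show ?thesis .
  qed
  have "dsize (enc_trm (tr_const (Node l r) rp)) = 7 + dsize (enc_trm (tr_const l (False # rp))) + dsize (enc_trm (tr_const r (True # rp)))"
    by simp
  also have "\<dots> \<le> 7 + dl * K + dr * K" using A B by simp
  also have "\<dots> \<le> dN * K" unfolding dN K_def by (simp add: algebra_simps)
  finally show ?case by (simp add: dN_def K_def)
qed

lemma dsize_tr_trm: "\<forall>c\<in>tconsts a. dsize (enc_tree c) \<le> N \<Longrightarrow> dsize (enc_trm (tr_trm a)) \<le> dsize (enc_trm a) * (13 + 4 * N)"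
proof (induction a)
  case (TVar x)
  have a: "dsize (enc_nat x) \<le> dsize (enc_nat x) * (13 + 4 * N)" by simp
  have b: "dsize (enc_trm (tr_trm (TVar x))) = 6 + dsize (enc_nat x)" by simp
  have c: "dsize (enc_trm (TVar x)) * (13 + 4 * N) = 2 * (13 + 4 * N) + dsize (enc_nat x) * (13 + 4 * N)"
    by (simp add: algebra_simps)
  show ?case unfolding b c by (simp add: algebra_simps)
next
  case (TConst c)
  have d: "dsize (enc_tree c) \<le> N" using TConst by simp
  have "dsize (enc_trm (tr_trm (TConst c))) \<le> dsize (enc_tree c) * (9 + 4 * (0 + dsize (enc_tree c)))"
    using dsize_tr_const[of c "[]"] by simp
  also have "\<dots> \<le> dsize (enc_tree c) * (13 + 4 * N)" using d by (intro mult_le_mono2) simp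
  also have "\<dots> \<le> dsize (enc_trm (TConst c)) * (13 + 4 * N)" by (intro mult_le_mono1) simp
  finally show ?case .
next
  case (TJoin a b)
  then show ?case by (simp add: algebra_simps)
next
  case (TMeet a b)
  then show ?case by (simp add: algebra_simps)
next
  case (TCompl a)
  then show ?case by (simp add: algebra_simps)
qed

lemma dsize_tr_fm:
  "\<forall>c\<in>fconsts \<phi>. dsize (enc_tree c) \<le> N \<Longrightarrow> dsize (enc_fm (tr_fm \<phi>)) \<le> dsize (enc_fm \<phi>) * (13 + 4 * N)"
proof (induction \<phi>)
  case (FEq a b)
  then show ?case using dsize_tr_trm[of a N] dsize_tr_trm[of b N] by (simp add: algebra_simps)
next
  case (FAll x p)
  have "dsize (enc_nat (2 * x + 1)) = 4 + dsize (enc_nat x)"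
    "dsize (enc_nat x) \<le> dsize (enc_nat x) * (13 + 4 * N)" by (simp_all add: enc_nat_odd)
  with FAll show ?case by (simp add: algebra_simps)
next
  case (FEx x p)
  have "dsize (enc_nat (2 * x + 1)) = 4 + dsize (enc_nat x)"
    "dsize (enc_nat x) \<le> dsize (enc_nat x) * (13 + 4 * N)" by (simp_all add: enc_nat_odd)
  with FEx show ?case by (simp add: algebra_simps)
qed (simp_all add: algebra_simps)

lemma dsize_split_ax: "dsize (enc_fm (split_ax rp)) \<le> 250 + 28 * length rp"
  using dsize_pos_code[of rp] by (simp add: split_ax_def enc_pvar)

lemma dsize_const_axs: "dsize (enc_fm (const_axs c rp C)) \<le> dsize (enc_fm C) + dsize (enc_tree c) * (260 + 28 * (length rp + dsize (enc_tree c)))"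
proof (induction c arbitrary: rp C)
  case (Leaf x) then show ?case by simp
next
  case (Node l r)
  define dl where "dl = dsize (enc_tree l)"
  define dr where "dr = dsize (enc_tree r)"
  define dN where "dN = dsize (enc_tree (Node l r))"
  have dN: "dN = 5 + dl + dr" by (simp add: dN_def dl_def dr_def)
  define K where "K = 260 + 28 * (length rp + dN)"
  have kl: "dl * (260 + 28 * (length (False # rp) + dl)) \<le> dl * K" unfolding K_def using dN by (intro mult_le_mono2) simp
  have kr: "dr * (260 + 28 * (length (True # rp) + dr)) \<le> dr * K" unfolding K_def using dN by (intro mult_le_mono2) simp
  have A: "dsize (enc_fm (const_axs l (False # rp) (FAnd (split_ax rp) C))) \<le> dsize (enc_fm
    (FAnd (split_ax rp) C)) + dl * K"
    using Node.IH(1)[of "False # rp" "FAnd (split_ax rp) C", folded dl_def] kl by linarith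
  have B: "dsize (enc_fm (const_axs (Node l r) rp C)) \<le> dsize (enc_fm (const_axs l (False # rp)
    (FAnd (split_ax rp) C))) + dr * K"
    using Node.IH(2)[of "True # rp" "const_axs l (False # rp)
      (FAnd (split_ax rp) C)", folded dr_def] kr by (simp only: const_axs.simps; linarith)
  have c: "dsize (enc_fm (FAnd (split_ax rp) C)) \<le> 257 + 28 * length rp + dsize (enc_fm C)"
    using dsize_split_ax[of rp] by simp
  have "dsize (enc_fm (const_axs (Node l r) rp C)) \<le> 257 + 28 * length rp + dsize (enc_fm C) + dl * K + dr * K"
    using A B c by linarith
  also have "\<dots> \<le> dsize (enc_fm C) + dN * K" unfolding dN K_def by (simp add: algebra_simps)
  finally show ?case by (simp add: dN_def K_def)
qed

fun vars_size :: "nat list \<Rightarrow> nat" where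
  "vars_size [] = 0"
| "vars_size (u # us) = 13 + dsize (enc_nat u) + vars_size us"

lemma vars_size_const_vars: "vars_size (const_vars c rp U) \<le> vars_size U + dsize (enc_tree c) * (60 + 8 * (length rp + dsize (enc_tree c)))"
proof (induction c arbitrary: rp U)
  case (Leaf x) then show ?case by simp
next
  case (Node l r)
  define dl where "dl = dsize (enc_tree l)"
  define dr where "dr = dsize (enc_tree r)"
  define dN where "dN = dsize (enc_tree (Node l r))"
  have dN: "dN = 5 + dl + dr" by (simp add: dN_def dl_def dr_def)
  define K where "K = 60 + 8 * (length rp + dN)"
  have kl: "dl * (60 + 8 * (length (False # rp) + dl)) \<le> dl * K" unfolding K_def using dN by (intro mult_le_mono2) simp
  have kr: "dr * (60 + 8 * (length (True # rp) + dr)) \<le> dr * K" unfolding K_def using dN by (intro mult_le_mono2) simp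
  define U1 where "U1 = pvar (False # rp) # pvar (True # rp) # U"
  have A: "vars_size (const_vars l (False # rp) U1) \<le> vars_size U1 + dl * K"
    using Node.IH(1)[of "False # rp" U1, folded dl_def] kl by linarith
  have B: "vars_size (const_vars (Node l r) rp U) \<le> vars_size (const_vars l (False # rp) U1) + dr * K"
    using Node.IH(2)[of "True # rp" "const_vars l (False # rp) U1", folded dr_def] kr by (simp only: const_vars.simps U1_def; linarith)
  have c: "vars_size U1 \<le> 48 + 8 * length rp + vars_size U"
    using dsize_pvar[of "False # rp"] dsize_pvar[of "True # rp"] by (simp add: U1_def)
  have "vars_size (const_vars (Node l r) rp U) \<le> 48 + 8 * length rp + vars_size U + dl * K + dr * K"
    using A B c by linarith
  also have "\<dots> \<le> vars_size U + dN * K" unfolding dN K_def by (simp add: algebra_simps)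
  finally show ?case by (simp add: dN_def K_def)
qed

lemma len_const_vars: "length (const_vars c rp U) \<le> length U + dsize (enc_tree c)"
proof (induction c arbitrary: rp U)
  case (Leaf x) then show ?case by simp
next
  case (Node l r)
  have h1: "length (const_vars l (False # rp) (pvar (False # rp) # pvar (True # rp) # U)) \<le> 2 + length U + dsize (enc_tree l)"
    using Node.IH(1)[of "False # rp" "pvar (False # rp) # pvar (True # rp) # U"] by simp
  have h2: "length (const_vars r (True # rp) (const_vars l (False # rp) (pvar (False # rp) # pvar (True # rp) # U)))
     \<le> length (const_vars l (False # rp) (pvar (False # rp) # pvar (True # rp) # U)) + dsize (enc_tree r)"
    by (rule Node.IH(2))
  show ?case using h1 h2 by simp
qed

lemma fold_size_bound:
  fixes g :: "'b \<Rightarrow> nat"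
  assumes "\<And>c x. c \<in> set cs \<Longrightarrow> g (f c x) \<le> g x + m c * K"
  shows "g (fold f cs x) \<le> g x + (\<Sum>c\<leftarrow>cs. m c) * K"
  using assms
proof (induction cs arbitrary: x)
  case (Cons c cs)
  have "g (fold f cs (f c x)) \<le> g (f c x) + (\<Sum>c\<leftarrow>cs. m c) * K"
    using Cons by simp
  also have "\<dots> \<le> g x + m c * K + (\<Sum>c\<leftarrow>cs. m c) * K"
    using Cons.prems by simp
  finally show ?case by (simp add: algebra_simps)
qed simp

lemma sum_dsize_fconst_list: "(\<Sum>c\<leftarrow>fconst_list \<phi>. dsize (enc_tree c)) \<le> dsize (enc_fm \<phi>)"
proof -
  have t: "(\<Sum>c\<leftarrow>tconst_list a. dsize (enc_tree c)) \<le> dsize (enc_trm a)" for a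
    by (induction a) auto
  show ?thesis
  proof (induction \<phi>)
    case (FEq a b)
    then show ?case using t[of a] t[of b] by simp
  qed auto
qed

lemma dsize_const_le: "c \<in> fconsts \<phi> \<Longrightarrow> dsize (enc_tree c) \<le> dsize (enc_fm \<phi>)"
  using member_le_sum_list[of "dsize (enc_tree c)" "map (\<lambda>c. dsize (enc_tree c)) (fconst_list \<phi>)"]
    sum_dsize_fconst_list[of \<phi>] by auto

lemma const_bound_fold_size:
  fixes g :: "'b \<Rightarrow> nat"
  assumes "\<forall>c\<in>fconsts \<phi>. dsize (enc_tree c) \<le> N"
    and "\<And>c x. g (f c x) \<le> g x + dsize (enc_tree c) * (A + B * dsize (enc_tree c))"
  shows "g (fold f (fconst_list \<phi>) x) \<le> g x + dsize (enc_fm \<phi>) * (A + B * N)"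
proof -
  have "g (fold f (fconst_list \<phi>) x) \<le> g x + (\<Sum>c\<leftarrow>fconst_list \<phi>. dsize (enc_tree c)) * (A + B * N)"
  proof (rule fold_size_bound)
    fix c y assume "c \<in> set (fconst_list \<phi>)"
    then have "A + B * dsize (enc_tree c) \<le> A + B * N" using assms(1) by simp
    then show "g (f c y) \<le> g y + dsize (enc_tree c) * (A + B * N)"
      using assms(2)[of c y] mult_le_mono2 order_trans by (metis add_le_mono1 add_left_mono)
  qed
  also have "\<dots> \<le> g x + dsize (enc_fm \<phi>) * (A + B * N)"
    using sum_dsize_fconst_list[of \<phi>] by simp
  finally show ?thesis .
qed

lemma dsize_fm_axs: "\<forall>c\<in>fconsts \<phi>. dsize (enc_tree c) \<le> N \<Longrightarrow>
  dsize (enc_fm (fm_axs \<phi> C)) \<le> dsize (enc_fm C) + dsize (enc_fm \<phi>) * (260 + 28 * N)"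
  unfolding fm_axs_def using dsize_const_axs[of _ "[]"]
  by (intro const_bound_fold_size[where g = "\<lambda>C. dsize (enc_fm C)"]) simp_all

lemma vars_size_fm_vars: "\<forall>c\<in>fconsts \<phi>. dsize (enc_tree c) \<le> N \<Longrightarrow>
  vars_size (fm_vars \<phi> U) \<le> vars_size U + dsize (enc_fm \<phi>) * (60 + 8 * N)"
  unfolding fm_vars_def using vars_size_const_vars[of _ "[]"]
  by (intro const_bound_fold_size[where g = vars_size]) simp_all

lemma length_fm_vars: "length (fm_vars \<phi> U) \<le> length U + dsize (enc_fm \<phi>)"
proof -
  have "length (fm_vars \<phi> U) \<le> length U + (\<Sum>c\<leftarrow>fconst_list \<phi>. dsize (enc_tree c)) * 1"
    unfolding fm_vars_def using len_const_vars[of _ "[]"] by (intro fold_size_bound) simp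
  then show ?thesis using sum_dsize_fconst_list[of \<phi>] by simp
qed

lemma dsize_fold: "dsize (enc_fm (fold (quant q) Us \<phi>)) \<le> dsize (enc_fm \<phi>) + vars_size Us"
proof (induction Us arbitrary: \<phi>)
  case Nil then show ?case by simp
next
  case (Cons u Us)
  have "dsize (enc_fm (quant q u \<phi>)) \<le> dsize (enc_fm \<phi>) + 13 + dsize (enc_nat u)" by (simp add: quant_def)
  then show ?case using Cons.IH[of "quant q u \<phi>"] by simp
qed

lemma dsize_reprefix: "prenex \<phi> \<Longrightarrow> dsize (enc_fm (reprefix M \<phi>)) + dsize (enc_fm M') = dsize (enc_fm (reprefix M' \<phi>)) + dsize (enc_fm M)"
  by (induction rule: prenex.induct) (case_tac p; simp)+

lemma dsize_matrix: "dsize (enc_fm (matrix \<phi>)) \<le> dsize (enc_fm \<phi>)"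
  by (induction \<phi>) auto

lemma prefix_len_le: "prefix_len \<phi> \<le> dsize (enc_fm \<phi>)"
  by (induction \<phi>) auto

definition time_const :: nat where
  "time_const = cost init_code + 1 + etime strip_guard + cost start_code + 2 + cost output_code
     + 3 * body_cost + strip_cost + 4 * body_cost"

lemma time_bound_linear: "time_bound \<Phi> \<le> time_const * fsize \<Phi> + time_const"
proof -
  define n where "n = fsize \<Phi>"
  have a: "prefix_len \<Phi> \<le> n" using prefix_len_le[of \<Phi>] by (simp add: n_def fsize_def)
  have b: "dsize (enc_fm (matrix \<Phi>)) \<le> n" using dsize_matrix[of \<Phi>] by (simp add: n_def fsize_def)
  have c: "length (fm_vars \<Phi> [pvar []]) \<le> 1 + n"
    using length_fm_vars[of \<Phi> "[pvar []]"] by (simp add: n_def fsize_def)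
  have "strip_cost * prefix_len \<Phi> \<le> strip_cost * n" "body_cost * prefix_len \<Phi> \<le> body_cost * n"
    "2 * body_cost * dsize (enc_fm (matrix \<Phi>)) \<le> 2 * body_cost * n"
    using a b by (simp_all add: mult_le_mono2)
  moreover have "body_cost * (length (fm_vars \<Phi> [pvar []]) + 1) \<le> body_cost * (n + 2)"
    using c by (intro mult_le_mono2) simp
  ultimately have "time_bound \<Phi> \<le> cost init_code + strip_cost * n + 1 + etime strip_guard + cost start_code
      + (body_cost + 2 * body_cost * n + body_cost * n + body_cost * (n + 2)) + 2 + cost output_code"
    unfolding time_bound_def loop_bound_def by linarith
  also have "\<dots> \<le> time_const * n + time_const" unfolding time_const_def by (simp add: algebra_simps)
  finally show ?thesis by (simp add: n_def)
qed

text \<open>Each of the \<open>O(n)\<close> new variables and splitting axioms has size \<open>O(n)\<close>, since positions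
  have length at most \<open>n\<close>.\<close>

lemma fsize_translate:
  assumes pr: "prenex \<Phi>"
  shows "fsize (translate \<Phi>) \<le> 420 * (fsize \<Phi>)\<^sup>2 + 420"
proof -
  define n where "n = fsize \<Phi>"
  define q where "q = starts_forall \<Phi>"
  define C where "C = fm_axs \<Phi> root_ax"
  define Us where "Us = fm_vars \<Phi> [pvar []]"
  define M where "M = guarded q C (tr_fm (matrix \<Phi>))"
  have consts_le: "\<forall>c\<in>fconsts \<Phi>. dsize (enc_tree c) \<le> n"
    using dsize_const_le by (simp add: n_def fsize_def)
  have tr: "dsize (enc_fm (tr_fm \<phi>)) \<le> n * (13 + 4 * n)"
    if "dsize (enc_fm \<phi>) \<le> n" "fconsts \<phi> = fconsts \<Phi>" for \<phi>
  proof -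
    have "dsize (enc_fm (tr_fm \<phi>)) \<le> dsize (enc_fm \<phi>) * (13 + 4 * n)"
      using dsize_tr_fm[of \<phi> n] consts_le that(2) by simp
    also have "\<dots> \<le> n * (13 + 4 * n)" using that(1) by (rule mult_le_mono1)
    finally show ?thesis .
  qed
  have "dsize (enc_fm root_ax) \<le> 30" by (simp add: root_ax_def enc_pvar)
  then have dC: "dsize (enc_fm C) \<le> 30 + n * (260 + 28 * n)"
    using dsize_fm_axs[OF consts_le, of root_ax] by (simp add: C_def n_def fsize_def)
  have "vars_size [pvar []] \<le> 30" by (simp add: enc_pvar)
  then have dUs: "vars_size Us \<le> 30 + n * (60 + 8 * n)"
    using vars_size_fm_vars[OF consts_le, of "[pvar []]"] by (simp add: Us_def n_def fsize_def)
  have dM: "dsize (enc_fm M) \<le> 13 + dsize (enc_fm C) + n * (13 + 4 * n)"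
    using tr[of "matrix \<Phi>"] dsize_matrix[of \<Phi>] by (simp add: M_def guarded_def n_def fsize_def)
  have "dsize (enc_fm (reprefix M \<Phi>)) \<le> dsize (enc_fm (tr_fm \<Phi>)) + dsize (enc_fm M)"
    using dsize_reprefix[OF pr, of M "tr_fm (matrix \<Phi>)"] tr_fm_reprefix[OF pr] by simp
  also have "\<dots> \<le> n * (13 + 4 * n) + dsize (enc_fm M)"
    using tr[of \<Phi>] by (simp add: n_def fsize_def)
  finally have dW: "dsize (enc_fm (reprefix M \<Phi>)) \<le> n * (13 + 4 * n) + dsize (enc_fm M)" .
  have "translate \<Phi> = fold (quant q) Us (reprefix M \<Phi>)"
    by (simp add: translate_def q_def C_def Us_def M_def)
  then have "fsize (translate \<Phi>) \<le> dsize (enc_fm (reprefix M \<Phi>)) + vars_size Us"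
    unfolding fsize_def using dsize_fold by simp
  also have "\<dots> \<le> 73 + 346 * n + 44 * (n * n)"
    using dW dM dC dUs by (simp add: algebra_simps)
  also have "\<dots> \<le> 420 * (n * n) + 420"
    using le_square[of n] by linarith
  finally show ?thesis by (simp add: n_def power2_eq_square)
qed

theorem lemma1:
  shows "\<exists>(p :: com) (c :: nat). \<forall>\<Phi>.
    sentence \<Phi> \<and> prenex \<Phi> \<and> (\<forall>k \<in> fconsts \<Phi>. canonical k) \<longrightarrow>
    (\<exists>\<Phi>' t. run p (enc_fm \<Phi>) t (enc_fm \<Phi>') \<and>
       t \<le> c * (fsize \<Phi>)\<^sup>2 + c \<and>
       sentence \<Phi>' \<and> prenex \<Phi>' \<and>
       fconsts \<Phi>' \<subseteq> {Leaf True, Leaf False} \<and>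
       alternations \<Phi>' = alternations \<Phi> \<and>
       (models_B \<Phi> \<longleftrightarrow> models_B \<Phi>') \<and>
       fsize \<Phi>' \<le> c * (fsize \<Phi>)\<^sup>2 + c)"
proof (intro exI[of _ translator] exI[of _ "time_const + 420"] allI impI)
  fix \<Phi> assume "sentence \<Phi> \<and> prenex \<Phi> \<and> (\<forall>k \<in> fconsts \<Phi>. canonical k)"
  then have sen: "sentence \<Phi>" and pr: "prenex \<Phi>" and const_can: "\<forall>k \<in> fconsts \<Phi>. canonical k"
    by auto
  obtain t where run: "run translator (enc_fm \<Phi>) t (enc_fm (translate \<Phi>))" and "t \<le> time_bound \<Phi>"
    using run_translator[OF pr] by blast
  moreover have "time_const * fsize \<Phi> \<le> time_const * (fsize \<Phi>)\<^sup>2"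
    unfolding power2_eq_square by (intro mult_le_mono2 le_square)
  ultimately have "t \<le> (time_const + 420) * (fsize \<Phi>)\<^sup>2 + (time_const + 420)"
    using time_bound_linear[of \<Phi>] unfolding distrib_right by linarith
  moreover have "fsize (translate \<Phi>) \<le> (time_const + 420) * (fsize \<Phi>)\<^sup>2 + (time_const + 420)"
    using fsize_translate[OF pr] by (simp add: algebra_simps)
  ultimately show "\<exists>\<Phi>' t. run translator (enc_fm \<Phi>) t (enc_fm \<Phi>') \<and>
       t \<le> (time_const + 420) * (fsize \<Phi>)\<^sup>2 + (time_const + 420) \<and>
       sentence \<Phi>' \<and> prenex \<Phi>' \<and> fconsts \<Phi>' \<subseteq> {Leaf True, Leaf False} \<and>
       alternations \<Phi>' = alternations \<Phi> \<and> (models_B \<Phi> \<longleftrightarrow> models_B \<Phi>') \<and>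
       fsize \<Phi>' \<le> (time_const + 420) * (fsize \<Phi>)\<^sup>2 + (time_const + 420)"
    using run sentence_translate[OF sen pr] prenex_translate[OF pr] fconsts_translate[OF pr]
      alternations_translate[OF pr] models_B_translate[OF sen pr const_can] by blast
qed

end
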